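(* Let $k:[0,\infty)\to(0,\infty)$ satisfy conditions (C1)–(C3) below with some $\alpha\in(0,1)$ and slowly varying $L$, and let $a=-\int_0^\infty k(s)\,ds$. If $r$ is the unique continuous solution of $r'(t)=ar(t)+\int_0^tk(t-s)r(s)\,ds$, $r(0)=1$, then $$\lim_{t\to\infty}r(t)\,t^{1-\alpha}L(t)=\frac{\sin(\alpha\pi)}{\pi}.$$ In particular, for $\alpha\in(0,1/2)$, $r\in L^2([0,\infty))$ but $r\notin L^1([0,\infty))$.
   Context: Conditions: (C1) $k\in L^1([0,\infty);(0,\infty))\cap C([0,\infty);(0,\infty))$; (C2) $t\mapsto\log\lambda(t)$ is convex, where $\lambda(t):=\int_t^\infty k(s)\,ds$; (C3) $\lambda(t)=L(t)t^{-\alpha}$ with $\alpha\in(0,1)$ and $L$ slowly varying at infinity. A measurable $L:[0,\infty)\to(0,\infty)$ is slowly varying at infinity if $L(xt)/L(t)\to1$ as $t\to\infty$ for every $x>0$. *)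

theory Defs
  imports "HOL-Analysis.Analysis"
begin

definition slowly_varying :: "(real \<Rightarrow> real) \<Rightarrow> bool" where
  "slowly_varying L \<longleftrightarrow>
     L \<in> borel_measurable lborel \<and> (\<forall>t\<ge>0. L t > 0) \<and>
     (\<forall>x>0. ((\<lambda>t. L (x * t) / L t) \<longlongrightarrow> 1) at_top)"

definition tail_int :: "(real \<Rightarrow> real) \<Rightarrow> real \<Rightarrow> real" where
  "tail_int k t = (LBINT s:{t..}. k s)"

end

theory Submission
  imports Defs "HOL-Real_Asymp.Real_Asymp"
begin

text \<open>
  Write \<open>lam t = \<integral> k over [t,\<infinity>)\<close>, so that \<open>a = - lam 0\<close>, and \<open>\<rho> = - r'\<close>.  Integrating the
  equation once shows that \<open>\<rho>\<close> solves the renewal equation \<open>\<rho> + lam * \<rho> = lam\<close>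
  (\<open>*\<close> = convolution on \<open>[0,t]\<close>).  The proof then runs as follows.

  (1) Log-convexity of \<open>lam\<close> gives Kaluza's inequality, which forces \<open>\<rho> > 0\<close>; hence \<open>r\<close> is
  nonincreasing.  Laplace transforms of nonnegative functions turn the renewal equation into
  \<open>Lr z = 1 / (z (1 + Llam z))\<close>, which also yields \<open>0 \<le> r \<le> 1\<close>.

  (2) Regular variation of \<open>lam\<close> with index \<open>-\<alpha>\<close> and Potter's bounds give, by dominated
  convergence, the Abelian asymptotics \<open>Llam (1/t) \<sim> \<Gamma>(1-\<alpha>) t lam t\<close>, hence
  \<open>lam t * Lr (s/t) \<longrightarrow> s powr -\<alpha> / \<Gamma>(1-\<alpha>)\<close>.

  (3) Karamata's Tauberian argument: sandwiching the indicator of \<open>[0,1]\<close> between polynomials in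
  \<open>exp (-v)\<close> (Weierstrass) yields \<open>lam t * \<integral> r over [0,t] \<longrightarrow> c/\<alpha>\<close> with
  \<open>c = 1/(\<Gamma>(\<alpha>) \<Gamma>(1-\<alpha>)) = sin(\<alpha>\<pi>)/\<pi>\<close>.

  (4) Since \<open>r\<close> is monotone this can be differentiated (monotone density theorem):
  \<open>t r(t) lam(t) \<longrightarrow> c\<close>, which is the claim because \<open>t lam(t) = t powr (1-\<alpha>) L(t)\<close>.  Potter's
  bound then gives \<open>r\<^sup>2\<close> integrable for \<open>\<alpha> < 1/2\<close>, while \<open>lam t * \<integral> r over [0,t] \<longrightarrow> c/\<alpha> > 0\<close>
  together with \<open>lam \<longrightarrow> 0\<close> excludes integrability of \<open>r\<close>.
\<close>

lemma convex_on_increment_mono: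
  fixes g :: "real \<Rightarrow> real"
  assumes g: "convex_on {0..} g" and uv: "0 \<le> u" "u \<le> v" and d: "0 \<le> d"
  shows "g (u + d) + g v \<le> g (v + d) + g u"
proof (cases "d = 0 \<or> u = v")
  case True thus ?thesis by auto
next
  case False
  define D where "D = v + d - u"
  have D: "D > 0" using False uv d unfolding D_def by auto
  define th where "th = d / D"
  define ph where "ph = (v - u) / D"
  have th: "0 \<le> th" "th \<le> 1" and ph: "0 \<le> ph" "ph \<le> 1"
    using D uv d unfolding th_def ph_def D_def by (auto simp: field_simps)
  have "th + ph = (d + (v - u)) / D" unfolding th_def ph_def by (simp add: add_divide_distrib)
  hence sum1: "th + ph = 1" using D unfolding D_def by simp
  have "th * D = d" "ph * D = v - u" using D unfolding th_def ph_def by simp_all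
  hence ud: "u + d = (1 - th) * u + th * (v + d)" and v: "v = (1 - ph) * u + ph * (v + d)"
    unfolding D_def by (simp_all add: algebra_simps)
  have "g (u + d) \<le> (1 - th) * g u + th * g (v + d)"
    unfolding ud using convex_onD[OF g, of th u "v + d"] th uv d by simp
  moreover have "g v \<le> (1 - ph) * g u + ph * g (v + d)"
    by (subst v) (use convex_onD[OF g, of ph u "v + d"] ph uv d in simp)
  moreover have "(1 - th) * g u + th * g (v + d) + ((1 - ph) * g u + ph * g (v + d))
      = (2 - (th + ph)) * g u + (th + ph) * g (v + d)" by (simp add: algebra_simps)
  ultimately show ?thesis using sum1 by simp
qed

text \<open>For a positive log-convex function the ratio \<open>f (t + d) / f t\<close> is nondecreasing in \<open>t\<close>.
  This is the only way the log-convexity hypothesis (C2) enters the proof.\<close>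
lemma log_convex_ratio_mono:
  fixes f :: "real \<Rightarrow> real"
  assumes conv: "convex_on {0..} (\<lambda>t. ln (f t))" and pos: "\<And>t. 0 \<le> t \<Longrightarrow> 0 < f t"
    and uv: "0 \<le> u" "u \<le> v" and d: "0 \<le> d"
  shows "f (u + d) * f v \<le> f (v + d) * f u"
proof -
  have p: "f (u + d) > 0" "f v > 0" "f (v + d) > 0" "f u > 0"
    using uv d pos by auto
  have "ln (f (u + d) * f v) \<le> ln (f (v + d) * f u)"
    using convex_on_increment_mono[OF conv uv d] p by (simp add: ln_mult)
  thus ?thesis using p by simp
qed

lemma continuous_on_reflect:
  fixes f :: "real \<Rightarrow> real"
  shows "continuous_on {0..} f \<Longrightarrow> continuous_on {0..T} (\<lambda>s. f (T - s))"
  by (rule continuous_on_compose2[of "{0..}" f "{0..T}" "\<lambda>s. T - s"]) (auto intro!: continuous_intros)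

lemma integral_rescale_unit:
  fixes h :: "real \<Rightarrow> real" assumes "0 < t"
  shows "integral {0..t} h = t * integral {0..1} (\<lambda>\<sigma>. h (t * \<sigma>))"
proof -
  have "(\<lambda>x. x / t) ` {0..t} = {0..1}"
    using assms by (auto simp: field_simps image_iff intro!: bexI[of _ "t * _"])
  hence "integral {0..1} (\<lambda>\<sigma>. h (t * \<sigma>)) = (1 / t) * integral {0..t} h"
    using integral_stretch_real[of t 0 t h] assms by simp
  thus ?thesis using assms by simp
qed

definition conv :: "(real \<Rightarrow> real) \<Rightarrow> (real \<Rightarrow> real) \<Rightarrow> real \<Rightarrow> real" where
  "conv f g t = integral {0..t} (\<lambda>s. f (t - s) * g s)"

lemma conv_integrable:
  fixes f g :: "real \<Rightarrow> real"
  assumes "continuous_on {0..} f" "continuous_on {0..} g"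
  shows "(\<lambda>s. f (t - s) * g s) integrable_on {0..t}"
  using assms
  by (intro integrable_continuous_real continuous_on_mult continuous_on_reflect)
     (auto elim: continuous_on_subset)

lemma has_integral_conv:
  fixes f g :: "real \<Rightarrow> real"
  assumes "continuous_on {0..} f" "continuous_on {0..} g"
  shows "((\<lambda>s. f (t - s) * g s) has_integral conv f g t) {0..t}"
  unfolding conv_def using conv_integrable[OF assms] by (rule integrable_integral)

text \<open>The convolution of continuous functions is continuous: after rescaling to the unit
  interval it is an integral depending continuously on a parameter.\<close>
lemma continuous_on_conv:
  fixes f g :: "real \<Rightarrow> real"
  assumes f: "continuous_on {0..} f" and g: "continuous_on {0..} g"
  shows "continuous_on {0..} (conv f g)"
proof -
  have c1: "continuous_on ({0..} \<times> {0..1}) (\<lambda>x. f (fst x - fst x * snd x))"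
    by (rule continuous_on_compose2[OF f]) (auto intro!: continuous_intros simp: mult_left_le)
  have c2: "continuous_on ({0..} \<times> {0..1}) (\<lambda>x. g (fst x * snd x))"
    by (rule continuous_on_compose2[OF g]) (auto intro!: continuous_intros)
  have "continuous_on ({0..} \<times> cbox 0 1) (\<lambda>(t, \<sigma>). f (t - t * \<sigma>) * g (t * \<sigma>))"
    using continuous_on_mult[OF c1 c2] by (simp add: case_prod_beta)
  from integral_continuous_on_param[OF this]
  have "continuous_on {0..} (\<lambda>t. t * integral {0..1} (\<lambda>\<sigma>. f (t - t * \<sigma>) * g (t * \<sigma>)))"
    by (auto intro!: continuous_intros)
  moreover have "t * integral {0..1} (\<lambda>\<sigma>. f (t - t * \<sigma>) * g (t * \<sigma>)) = conv f g t"
    if "t \<in> {0..}" for t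
    using that integral_rescale_unit[of t] by (cases "t = 0") (auto simp: conv_def)
  ultimately show ?thesis by (rule continuous_on_eq)
qed

definition extend0 :: "(real \<Rightarrow> real) \<Rightarrow> real \<Rightarrow> real" where
  "extend0 f x = indicator {0..} x * f x"

lemma extend0_measurable: "continuous_on {0..} f \<Longrightarrow> extend0 f \<in> borel_measurable borel"
  unfolding extend0_def
  using borel_measurable_continuous_on_indicator[of "{0..}" f] by simp

lemma extend0_nonneg: "(\<And>x. 0 \<le> x \<Longrightarrow> 0 \<le> f x) \<Longrightarrow> 0 \<le> extend0 f x"
  unfolding extend0_def by (auto split: split_indicator)

text \<open>The Laplace transform as an extended nonnegative real, so that it is always defined
  and the algebra of transforms needs no integrability side conditions.\<close>
definition laplace :: "(real \<Rightarrow> real) \<Rightarrow> real \<Rightarrow> ennreal" where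
  "laplace h z = (\<integral>\<^sup>+ t. ennreal (exp (- z * t) * extend0 h t) \<partial>lborel)"

lemma conv_as_nn_integral:
  fixes f g :: "real \<Rightarrow> real"
  assumes f: "continuous_on {0..} f" and g: "continuous_on {0..} g"
    and fp: "\<And>x. 0 \<le> x \<Longrightarrow> 0 \<le> f x" and gp: "\<And>x. 0 \<le> x \<Longrightarrow> 0 \<le> g x"
  shows "ennreal (extend0 (conv f g) t) = (\<integral>\<^sup>+ s. ennreal (extend0 f (t - s) * extend0 g s) \<partial>lborel)"
proof (cases "0 \<le> t")
  case True
  have "(\<integral>\<^sup>+ s. ennreal (indicator {0..t} s * (f (t - s) * g s)) \<partial>lborel) = ennreal (conv f g t)"
    by (rule nn_integral_has_integral_lebesgue[OF _ has_integral_conv[OF f g]]) (use fp gp in auto)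
  moreover have "(\<lambda>s. ennreal (extend0 f (t - s) * extend0 g s))
      = (\<lambda>s. ennreal (indicator {0..t} s * (f (t - s) * g s)))"
    by (rule ext) (auto simp: extend0_def split: split_indicator)
  ultimately show ?thesis using True unfolding extend0_def by simp
next
  case False
  hence "(\<lambda>s. ennreal (extend0 f (t - s) * extend0 g s)) = (\<lambda>s. 0)"
    by (intro ext) (auto simp: extend0_def split: split_indicator)
  thus ?thesis using False unfolding extend0_def by simp
qed

text \<open>Convolution theorem (Tonelli plus translation invariance of Lebesgue measure).\<close>
lemma laplace_conv:
  fixes f g :: "real \<Rightarrow> real"
  assumes f: "continuous_on {0..} f" and g: "continuous_on {0..} g"
    and fp: "\<And>x. 0 \<le> x \<Longrightarrow> 0 \<le> f x" and gp: "\<And>x. 0 \<le> x \<Longrightarrow> 0 \<le> g x"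
  shows "laplace (conv f g) z = laplace f z * laplace g z"
proof -
  note [measurable] = extend0_measurable[OF f] extend0_measurable[OF g]
  define F where "F t s = ennreal (exp (- z * t) * extend0 f (t - s) * extend0 g s)" for t s
  have efp: "\<And>x. 0 \<le> extend0 f x" and egp: "\<And>x. 0 \<le> extend0 g x"
    using extend0_nonneg fp gp by blast+
  have cn: "0 \<le> extend0 (conv f g) t" for t
  proof (rule extend0_nonneg)
    fix x :: real assume "0 \<le> x"
    show "0 \<le> conv f g x" unfolding conv_def
      by (rule integral_nonneg[OF conv_integrable[OF f g]]) (use fp gp in auto)
  qed
  have inner: "ennreal (exp (- z * t) * extend0 (conv f g) t) = (\<integral>\<^sup>+ s. F t s \<partial>lborel)" for t
  proof -
    have "ennreal (exp (- z * t) * extend0 (conv f g) t)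
        = ennreal (exp (- z * t)) * (\<integral>\<^sup>+ s. ennreal (extend0 f (t - s) * extend0 g s) \<partial>lborel)"
      using cn conv_as_nn_integral[OF f g fp gp, of t] by (simp add: ennreal_mult)
    also have "\<dots> = (\<integral>\<^sup>+ s. ennreal (exp (- z * t)) * ennreal (extend0 f (t - s) * extend0 g s) \<partial>lborel)"
      by (rule nn_integral_cmult[symmetric]) measurable
    also have "\<dots> = (\<integral>\<^sup>+ s. F t s \<partial>lborel)"
      unfolding F_def using efp egp
      by (intro nn_integral_cong) (simp add: ennreal_mult[symmetric] mult.assoc)
    finally show ?thesis .
  qed
  have shifted: "(\<integral>\<^sup>+ t. F t s \<partial>lborel) = ennreal (exp (- z * s) * extend0 g s) * laplace f z" for s
  proof -
    have "(\<integral>\<^sup>+ t. F t s \<partial>lborel) = (\<integral>\<^sup>+ u. F (s + 1 * u) s \<partial>lborel)"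
      using nn_integral_real_affine[of "\<lambda>t. F t s" 1 s] unfolding F_def by simp
    also have "\<dots> = (\<integral>\<^sup>+ u. ennreal (exp (- z * s) * extend0 g s) * ennreal (exp (- z * u) * extend0 f u) \<partial>lborel)"
      unfolding F_def using efp egp
      by (intro nn_integral_cong) (simp add: ennreal_mult[symmetric] exp_add[symmetric] algebra_simps)
    also have "\<dots> = ennreal (exp (- z * s) * extend0 g s) * laplace f z"
      unfolding laplace_def by (rule nn_integral_cmult) measurable
    finally show ?thesis .
  qed
  have meas: "case_prod (\<lambda>s t. F t s) \<in> borel_measurable (lborel \<Otimes>\<^sub>M lborel)"
    unfolding F_def by measurable
  have "laplace (conv f g) z = (\<integral>\<^sup>+ t. (\<integral>\<^sup>+ s. F t s \<partial>lborel) \<partial>lborel)"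
    unfolding laplace_def using inner by simp
  also have "\<dots> = (\<integral>\<^sup>+ s. (\<integral>\<^sup>+ t. F t s \<partial>lborel) \<partial>lborel)"
    using lborel_pair.Fubini'[OF meas] by simp
  also have "\<dots> = laplace g z * laplace f z"
    unfolding shifted laplace_def by (rule nn_integral_multc) measurable
  finally show ?thesis by (simp add: mult.commute)
qed

lemma laplace_add:
  fixes h1 h2 h3 :: "real \<Rightarrow> real"
  assumes c: "continuous_on {0..} h1" "continuous_on {0..} h2"
    and p: "\<And>x. 0 \<le> x \<Longrightarrow> 0 \<le> h1 x" "\<And>x. 0 \<le> x \<Longrightarrow> 0 \<le> h2 x"
    and e: "\<And>x. 0 \<le> x \<Longrightarrow> h1 x + h2 x = h3 x"
  shows "laplace h1 z + laplace h2 z = laplace h3 z"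
proof -
  note [measurable] = extend0_measurable[OF c(1)] extend0_measurable[OF c(2)]
  have "laplace h1 z + laplace h2 z = (\<integral>\<^sup>+ t. ennreal (exp (- z * t) * extend0 h1 t)
      + ennreal (exp (- z * t) * extend0 h2 t) \<partial>lborel)"
    unfolding laplace_def by (rule nn_integral_add[symmetric]) measurable
  also have "\<dots> = laplace h3 z" unfolding laplace_def
  proof (rule nn_integral_cong)
    fix t
    have "0 \<le> extend0 h1 t" "0 \<le> extend0 h2 t" using extend0_nonneg p by blast+
    moreover have "extend0 h1 t + extend0 h2 t = extend0 h3 t"
      using e unfolding extend0_def by (auto split: split_indicator)
    ultimately show "ennreal (exp (- z * t) * extend0 h1 t) + ennreal (exp (- z * t) * extend0 h2 t)
        = ennreal (exp (- z * t) * extend0 h3 t)"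
      by (simp add: ennreal_plus[symmetric] distrib_left[symmetric] del: ennreal_plus)
  qed
  finally show ?thesis .
qed

lemma nn_integral_exp_half_line:
  assumes "0 < z"
  shows "(\<integral>\<^sup>+ t. ennreal (indicator {0..} t * exp (- z * t)) \<partial>lborel) = ennreal (1 / z)"
  using nn_integral_has_integral_lebesgue[OF _ has_integral_exp_minus_to_infinity[OF assms, of 0]]
  by simp

lemma laplace_one: assumes "0 < z" shows "laplace (\<lambda>_. 1) z = ennreal (1 / z)"
  unfolding laplace_def extend0_def using nn_integral_exp_half_line[OF assms]
  by (simp add: mult.commute)

lemma laplace_bounded:
  fixes h :: "real \<Rightarrow> real"
  assumes b: "\<And>x. 0 \<le> x \<Longrightarrow> h x \<le> M" and M: "0 \<le> M" and z: "0 < z"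
  shows "laplace h z \<le> ennreal (M / z)"
proof -
  have "laplace h z \<le> (\<integral>\<^sup>+ t. ennreal M * ennreal (indicator {0..} t * exp (- z * t)) \<partial>lborel)"
    unfolding laplace_def
  proof (rule nn_integral_mono)
    fix t
    have "exp (- z * t) * extend0 h t \<le> M * (indicator {0..} t * exp (- z * t))"
      using b[of t] M unfolding extend0_def by (auto split: split_indicator)
    thus "ennreal (exp (- z * t) * extend0 h t) \<le> ennreal M * ennreal (indicator {0..} t * exp (- z * t))"
      using M by (simp add: ennreal_mult[symmetric] ennreal_leI)
  qed
  also have "\<dots> = ennreal M * (\<integral>\<^sup>+ t. ennreal (indicator {0..} t * exp (- z * t)) \<partial>lborel)"
    by (rule nn_integral_cmult) measurable
  also have "\<dots> = ennreal M * ennreal (1 / z)"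
    by (simp only: nn_integral_exp_half_line[OF z])
  also have "\<dots> = ennreal (M / z)" using M z by (simp add: ennreal_mult[symmetric])
  finally show ?thesis .
qed

lemma laplace_as_integral:
  fixes h :: "real \<Rightarrow> real"
  assumes "continuous_on {0..} h" and "\<And>x. 0 \<le> x \<Longrightarrow> 0 \<le> h x"
  shows "enn2real (laplace h z) = (\<integral>t. exp (- z * t) * extend0 h t \<partial>lborel)"
proof -
  note [measurable] = extend0_measurable[OF assms(1)]
  show ?thesis unfolding laplace_def
    by (rule integral_eq_nn_integral[symmetric]) (use extend0_nonneg[OF assms(2)] in auto)
qed

lemma ennreal_enn2real_if_bounded: "(p::ennreal) \<le> ennreal x \<Longrightarrow> ennreal (enn2real p) = p"
  by (simp add: order_le_less_trans[OF _ ennreal_less_top])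

lemma ennreal_le_of_add_eq: "(p::ennreal) + q = c \<Longrightarrow> p \<le> c"
  by (metis add_increasing2 zero_le order_refl)

lemma integrable_exp_half_line:
  assumes m: "0 < m" shows "integrable lborel (\<lambda>x::real. indicator {0..} x * exp (- m * x))"
proof -
  have "(\<integral>\<^sup>+ x. ennreal (indicator {0..} x * exp (- m * x)) \<partial>lborel) = ennreal (1 / m)"
    by (rule nn_integral_exp_half_line[OF m])
  thus ?thesis by (intro integrableI_nonneg) auto
qed

lemma Gamma_integral_lborel:
  fixes c :: real assumes c: "0 < c"
  shows "integrable lborel (\<lambda>x::real. indicator {0..} x * (x powr (c - 1) / exp x))"
    and "(\<integral>x. indicator {0..} x * (x powr (c - 1) / exp x) \<partial>lborel) = Gamma c"
proof -
  have nn: "(\<integral>\<^sup>+ x. ennreal (indicator {0..} x * (x powr (c - 1) / exp x)) \<partial>lborel) = ennreal (Gamma c)"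
    by (rule nn_integral_has_integral_lebesgue[OF _ Gamma_integral_real[OF c]]) auto
  thus "integrable lborel (\<lambda>x::real. indicator {0..} x * (x powr (c - 1) / exp x))"
    by (intro integrableI_nonneg) auto
  have "(\<integral>x. indicator {0..} x * (x powr (c - 1) / exp x) \<partial>lborel)
      = enn2real (\<integral>\<^sup>+ x. ennreal (indicator {0..} x * (x powr (c - 1) / exp x)) \<partial>lborel)"
    by (rule integral_eq_nn_integral) auto
  thus "(\<integral>x. indicator {0..} x * (x powr (c - 1) / exp x) \<partial>lborel) = Gamma c"
    unfolding nn using Gamma_real_nonneg[OF c] by simp
qed

lemma integrable_powr_tail:
  fixes q T :: real assumes q: "q < -1" and T: "0 < T"
  shows "integrable lborel (\<lambda>t. indicator {T..} t * t powr q)"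
proof -
  have "(\<integral>\<^sup>+ x. ennreal (indicator {T..} x * x powr q) \<partial>lborel) = ennreal (- (T powr (q + 1)) / (q + 1))"
    by (rule nn_integral_has_integral_lebesgue[OF _ has_integral_powr_to_inf[OF q T]]) simp
  thus ?thesis by (intro integrableI_nonneg) auto
qed

lemma Gamma_reflection_real:
  assumes "0 < x" "x < 1" shows "Gamma x * Gamma (1 - x) = pi / sin (pi * x)"
proof -
  have "Gamma (complex_of_real x) * Gamma (1 - complex_of_real x) = of_real pi / sin (of_real pi * of_real x)"
    by (rule Gamma_reflection_complex)
  hence "complex_of_real (Gamma x * Gamma (1 - x)) = complex_of_real (pi / sin (pi * x))"
    by (simp add: Gamma_complex_of_real[symmetric] sin_of_real[symmetric])
  thus ?thesis by (simp only: of_real_eq_iff)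
qed

text \<open>In Karamata's argument test functions \<open>\<phi>\<close> are integrated against \<open>v powr (\<alpha> - 1) dv\<close>,
  the Laplace-Stieltjes measure whose transform is \<open>\<Gamma>(\<alpha>) s powr -\<alpha>\<close>.\<close>
definition moment_density :: "real \<Rightarrow> (real \<Rightarrow> real) \<Rightarrow> real \<Rightarrow> real" where
  "moment_density c \<phi> v = indicator {0..} v * \<phi> v * v powr (c - 1)"

definition moment :: "real \<Rightarrow> (real \<Rightarrow> real) \<Rightarrow> real" where
  "moment c \<phi> = (\<integral>v. moment_density c \<phi> v \<partial>lborel)"

lemma moment_mono:
  assumes le: "\<And>v. 0 \<le> v \<Longrightarrow> \<phi> v \<le> \<psi> v"
    and i: "integrable lborel (moment_density c \<phi>)" "integrable lborel (moment_density c \<psi>)"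
  shows "moment c \<phi> \<le> moment c \<psi>"
  unfolding moment_def
proof (rule integral_mono[OF i])
  fix v :: real
  show "moment_density c \<phi> v \<le> moment_density c \<psi> v"
    using le[of v] unfolding moment_density_def by (cases "0 \<le> v") (auto intro: mult_right_mono)
qed

lemma moment_exp:
  assumes c: "0 < c" and m: "0 < m"
  shows "integrable lborel (moment_density c (\<lambda>v. exp (- m * v)))"
    and "moment c (\<lambda>v. exp (- m * v)) = Gamma c * m powr - c"
proof -
  define f where "f = moment_density c (\<lambda>v. exp (- m * v))"
  define g where "g u = indicator {0..} u * (u powr (c - 1) / exp u)" for u :: real
  have eq: "f (0 + (1 / m) * u) = m powr (1 - c) * g u" for u
  proof (cases "u \<ge> 0")
    case True
    have "(u / m) powr (c - 1) = m powr (1 - c) * u powr (c - 1)"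
      using True m by (simp add: powr_divide powr_diff)
    thus ?thesis unfolding f_def g_def moment_density_def using True m by (simp add: exp_minus field_simps)
  next
    case False
    hence "u / m < 0" using m by (simp add: divide_neg_pos)
    thus ?thesis unfolding f_def g_def moment_density_def using False by simp
  qed
  have gi: "integrable lborel g" unfolding g_def by (rule Gamma_integral_lborel(1)[OF c])
  have "integrable lborel (\<lambda>u. f (0 + (1 / m) * u))"
    unfolding eq using gi by simp
  thus "integrable lborel (moment_density c (\<lambda>v. exp (- m * v)))"
    using lborel_integrable_real_affine_iff[of "1 / m" f 0] m unfolding f_def by simp
  have "moment c (\<lambda>v. exp (- m * v)) = \<bar>1 / m\<bar> *\<^sub>R (\<integral>u. f (0 + (1 / m) * u) \<partial>lborel)"
    unfolding moment_def f_def by (rule lborel_integral_real_affine) (use m in auto)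
  also have "\<dots> = (1 / m) * (m powr (1 - c) * Gamma c)"
  proof -
    have "(\<integral>u. g u \<partial>lborel) = Gamma c" unfolding g_def by (rule Gamma_integral_lborel(2)[OF c])
    thus ?thesis unfolding eq using m by simp
  qed
  also have "\<dots> = Gamma c * m powr - c"
    using m by (simp add: powr_diff powr_minus divide_inverse)
  finally show "moment c (\<lambda>v. exp (- m * v)) = Gamma c * m powr - c" .
qed

lemma moment_indicator_unit:
  assumes c: "0 < c"
  shows "integrable lborel (moment_density c (indicator {..1}))"
    and "moment c (indicator {..1}) = 1 / c"
proof -
  have ind: "moment_density c (indicator {..1}) = (\<lambda>v. indicator {0..1} v * v powr (c - 1))"
    by (auto simp: moment_density_def split: split_indicator)
  have hi: "((\<lambda>x. x powr (c - 1)) has_integral (1 powr (c - 1 + 1) / (c - 1 + 1))) {0..1}"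
    by (rule has_integral_powr_from_0) (use c in auto)
  have nn: "(\<integral>\<^sup>+ x. ennreal (indicator {0..1} x * x powr (c - 1)) \<partial>lborel) = ennreal (1 / c)"
    using nn_integral_has_integral_lebesgue[OF _ hi] by simp
  thus "integrable lborel (moment_density c (indicator {..1}))"
    unfolding ind by (intro integrableI_nonneg) auto
  have "(\<integral>x. indicator {0..1} x * x powr (c - 1) \<partial>lborel)
      = enn2real (\<integral>\<^sup>+ x. ennreal (indicator {0..1} x * x powr (c - 1)) \<partial>lborel)"
    by (rule integral_eq_nn_integral) auto
  thus "moment c (indicator {..1}) = 1 / c"
    unfolding moment_def ind nn using c by simp
qed

definition exp_poly :: "(nat \<Rightarrow> real) \<Rightarrow> nat \<Rightarrow> real \<Rightarrow> real" where
  "exp_poly cf n v = (\<Sum>i\<le>n. cf i * exp (- (real i + 1) * v))"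

lemma exp_poly_alt: "exp_poly cf n v = exp (- v) * (\<Sum>i\<le>n. cf i * exp (- v) ^ i)"
  unfolding exp_poly_def sum_distrib_left
proof (rule sum.cong[OF refl])
  fix i
  have "exp (- (real i + 1) * v) = exp (- v) * exp (- v) ^ i"
    by (simp add: exp_of_nat_mult[symmetric] exp_add[symmetric] algebra_simps)
  thus "cf i * exp (- (real i + 1) * v) = exp (- v) * (cf i * exp (- v) ^ i)" by simp
qed

lemma moment_exp_poly:
  assumes c: "0 < c"
  shows "integrable lborel (moment_density c (exp_poly cf n))"
    and "moment c (exp_poly cf n) = Gamma c * (\<Sum>i\<le>n. cf i * (real i + 1) powr - c)"
proof -
  have e: "moment_density c (exp_poly cf n)
      = (\<lambda>v. \<Sum>i\<le>n. cf i * moment_density c (\<lambda>v. exp (- (real i + 1) * v)) v)"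
    unfolding exp_poly_def moment_density_def
    by (rule ext) (simp add: sum_distrib_left sum_distrib_right algebra_simps)
  have ii: "integrable lborel (\<lambda>v. cf i * moment_density c (\<lambda>v. exp (- (real i + 1) * v)) v)" for i
    by (intro Bochner_Integration.integrable_mult_right moment_exp(1) c) auto
  show "integrable lborel (moment_density c (exp_poly cf n))"
    unfolding e using ii by (intro Bochner_Integration.integrable_sum) auto
  have "moment c (exp_poly cf n) = (\<Sum>i\<le>n. cf i * moment c (\<lambda>v. exp (- (real i + 1) * v)))"
    unfolding moment_def e by (subst Bochner_Integration.integral_sum) (use ii in auto)
  also have "\<dots> = (\<Sum>i\<le>n. cf i * (Gamma c * (real i + 1) powr - c))"
  proof (rule sum.cong[OF refl])
    fix i :: nat
    have "real i + 1 > 0" by simp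
    from moment_exp(2)[OF c this]
    show "cf i * moment c (\<lambda>v. exp (- (real i + 1) * v)) = cf i * (Gamma c * (real i + 1) powr - c)"
      by simp
  qed
  finally show "moment c (exp_poly cf n) = Gamma c * (\<Sum>i\<le>n. cf i * (real i + 1) powr - c)"
    by (simp add: sum_distrib_left algebra_simps)
qed

lemma poly_approx_above:
  fixes h :: "real \<Rightarrow> real"
  assumes c: "continuous_on {0..1} h" and d: "0 < d"
  obtains cf n where "\<And>y. y \<in> {0..1} \<Longrightarrow> h y \<le> (\<Sum>i\<le>n. cf i * y ^ i) \<and> (\<Sum>i\<le>n. cf i * y ^ i) \<le> h y + 2 * d"
proof -
  obtain g where g: "real_polynomial_function g" and gh: "\<And>y. y \<in> {0..1} \<Longrightarrow> \<bar>h y - g y\<bar> < d"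
    using Stone_Weierstrass_real_polynomial_function[OF compact_Icc c d] by blast
  obtain a n where gs: "g = (\<lambda>x. \<Sum>i\<le>n. a i * x ^ i)" using g real_polynomial_function_iff_sum by blast
  define cf where "cf i = a i + (if i = 0 then d else 0)" for i
  have "(\<Sum>i\<le>n. cf i * y ^ i) = g y + d" for y
  proof -
    have "(\<Sum>i\<le>n. (if i = 0 then d else 0) * y ^ i) = (\<Sum>i\<le>n. if i = 0 then d else 0)"
      by (rule sum.cong) auto
    thus ?thesis unfolding cf_def gs by (simp add: sum.distrib algebra_simps)
  qed
  with gh show ?thesis by (intro that[of cf n]) (fastforce simp: abs_less_iff)
qed

lemma poly_approx_below:
  fixes h :: "real \<Rightarrow> real"
  assumes c: "continuous_on {0..1} h" and d: "0 < d"
  obtains cf n where "\<And>y. y \<in> {0..1} \<Longrightarrow> h y - 2 * d \<le> (\<Sum>i\<le>n. cf i * y ^ i) \<and> (\<Sum>i\<le>n. cf i * y ^ i) \<le> h y"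
proof -
  have "continuous_on {0..1} (\<lambda>y. - h y)" using c by (intro continuous_intros)
  then obtain cf n where P: "\<And>y. y \<in> {0..1} \<Longrightarrow> - h y \<le> (\<Sum>i\<le>n. cf i * y ^ i) \<and> (\<Sum>i\<le>n. cf i * y ^ i) \<le> - h y + 2 * d"
    using poly_approx_above[OF _ d] by blast
  have "(\<Sum>i\<le>n. (- cf i) * y ^ i) = - (\<Sum>i\<le>n. cf i * y ^ i)" for y
    by (simp add: sum_negf)
  with P show ?thesis by (intro that[of "\<lambda>i. - cf i" n]) fastforce
qed

text \<open>Continuous cut-offs \<open>hL \<le> hH\<close> on \<open>[0,1]\<close> such that \<open>y hL(y)\<close> and \<open>y hH(y)\<close> lie below and
  above the step at \<open>a\<close> and differ only on \<open>[a - \<eta>, a + \<eta>]\<close>.  (The factor \<open>y\<close> is the factor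
  \<open>e\<^sup>-\<^sup>v\<close> of an exponential polynomial.)\<close>
lemma unit_step_cutoffs:
  fixes a \<eta> :: real
  assumes a: "0 < a" and \<eta>: "0 < \<eta>"
  obtains hL hH where "continuous_on {0..1} hL" "continuous_on {0..1} hH"
    and "\<And>y. 0 < y \<Longrightarrow> y * hL y \<le> (if a \<le> y then 1 else 0)"
    and "\<And>y. 0 < y \<Longrightarrow> (if a \<le> y then 1 else 0) \<le> y * hH y"
    and "\<And>y. 0 < y \<Longrightarrow> y * (hH y - hL y) \<le> indicator {a - \<eta>..a + \<eta>} y"
proof -
  define clamp :: "real \<Rightarrow> real" where "clamp x = max 0 (min 1 x)" for x
  have clamp: "0 \<le> clamp x" "clamp x \<le> 1" for x unfolding clamp_def by auto
  define hH where "hH y = clamp ((y - (a - \<eta>)) / \<eta>) / max y a" for y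
  define hL where "hL y = clamp ((y - a) / \<eta>) / max y a" for y
  have cont_clamp: "continuous_on S (\<lambda>x. clamp (f x))" if "continuous_on S f" for S f
    unfolding clamp_def using that by (intro continuous_intros)
  have "continuous_on {0..1} hH" "continuous_on {0..1} hL"
    unfolding hH_def hL_def by (intro continuous_intros cont_clamp; use a \<eta> in auto)+
  moreover have "y * hL y \<le> (if a \<le> y then 1 else 0)" if "0 < y" for y
  proof (cases "a \<le> y")
    case False
    hence "(y - a) / \<eta> \<le> 0" using \<eta> by (simp add: divide_nonpos_pos)
    thus ?thesis unfolding hL_def clamp_def using False by simp
  qed (use that clamp in \<open>simp add: hL_def\<close>)
  moreover have "(if a \<le> y then 1 else 0) \<le> y * hH y" if "0 < y" for y
  proof (cases "a \<le> y")
    case True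
    hence "(y - (a - \<eta>)) / \<eta> \<ge> 1" using \<eta> by simp
    thus ?thesis unfolding hH_def clamp_def using True that by simp
  qed (use that clamp a in \<open>simp add: hH_def\<close>)
  moreover have "y * (hH y - hL y) \<le> indicator {a - \<eta>..a + \<eta>} y" if y: "0 < y" for y
  proof -
    consider "y < a - \<eta>" | "a + \<eta> < y" | "y \<in> {a - \<eta>..a + \<eta>}" by force
    thus ?thesis
    proof cases
      case 1
      hence "(y - (a - \<eta>)) / \<eta> \<le> 0" "(y - a) / \<eta> \<le> 0" using \<eta> by (auto simp: divide_nonpos_pos)
      thus ?thesis unfolding hH_def hL_def clamp_def by simp
    next
      case 2
      hence "(y - (a - \<eta>)) / \<eta> \<ge> 1" "(y - a) / \<eta> \<ge> 1" using \<eta> by auto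
      thus ?thesis unfolding hH_def hL_def clamp_def by simp
    next
      case 3
      have "y * hH y = clamp ((y - (a - \<eta>)) / \<eta>) * (y / max y a)" unfolding hH_def by simp
      also have "\<dots> \<le> 1 * 1" using clamp y a by (intro mult_mono) (auto simp: divide_le_eq_1)
      finally have "y * hH y \<le> 1" by simp
      moreover have "0 \<le> y * hL y" unfolding hL_def using y clamp a by simp
      ultimately show ?thesis using 3 by (simp add: algebra_simps)
    qed
  qed
  ultimately show ?thesis using that by blast
qed

lemma exp_poly_brackets:
  fixes \<eta> \<delta> :: real
  assumes \<eta>: "0 < \<eta>" and \<delta>: "0 < \<delta>"
  obtains cl nl ch nh where "\<And>v. 0 \<le> v \<Longrightarrow> exp_poly cl nl v \<le> indicator {..1} v"
    and "\<And>v. 0 \<le> v \<Longrightarrow> indicator {..1} v \<le> exp_poly ch nh v"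
    and "\<And>v. 0 \<le> v \<Longrightarrow> exp_poly ch nh v - exp_poly cl nl v
          \<le> indicator {exp (- 1) - \<eta>..exp (- 1) + \<eta>} (exp (- v)) + 4 * \<delta> * exp (- v)"
proof -
  define a :: real where "a = exp (- 1)"
  obtain hL hH where cL: "continuous_on {0..1} hL" and cH: "continuous_on {0..1} hH"
    and G1: "\<And>y. 0 < y \<Longrightarrow> y * hL y \<le> (if a \<le> y then 1 else 0)"
    and G2: "\<And>y. 0 < y \<Longrightarrow> (if a \<le> y then 1 else 0) \<le> y * hH y"
    and G3: "\<And>y. 0 < y \<Longrightarrow> y * (hH y - hL y) \<le> indicator {a - \<eta>..a + \<eta>} y"
    using unit_step_cutoffs[of a \<eta>] \<eta> unfolding a_def by auto
  obtain ch nh where PH: "\<And>y. y \<in> {0..1} \<Longrightarrow> hH y \<le> (\<Sum>i\<le>nh. ch i * y ^ i) \<and> (\<Sum>i\<le>nh. ch i * y ^ i) \<le> hH y + 2 * \<delta>"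
    using poly_approx_above[OF cH \<delta>] by blast
  obtain cl nl where PL: "\<And>y. y \<in> {0..1} \<Longrightarrow> hL y - 2 * \<delta> \<le> (\<Sum>i\<le>nl. cl i * y ^ i) \<and> (\<Sum>i\<le>nl. cl i * y ^ i) \<le> hL y"
    using poly_approx_below[OF cL \<delta>] by blast
  show ?thesis
  proof (rule that[of cl nl ch nh])
    fix v :: real assume v: "0 \<le> v"
    define y where "y = exp (- v)"
    have y: "0 < y" "y \<le> 1" unfolding y_def using v by auto
    have step: "indicator {..1} v = (if a \<le> y then 1 else 0)"
      unfolding a_def y_def by (auto split: split_indicator)
    have "exp_poly cl nl v = y * (\<Sum>i\<le>nl. cl i * y ^ i)" unfolding exp_poly_alt y_def ..
    also have "\<dots> \<le> y * hL y" using PL[of y] y by (intro mult_left_mono) auto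
    also have "\<dots> \<le> indicator {..1} v" unfolding step by (rule G1[OF y(1)])
    finally show "exp_poly cl nl v \<le> indicator {..1} v" .
    have "indicator {..1} v \<le> y * hH y" unfolding step by (rule G2[OF y(1)])
    also have "\<dots> \<le> y * (\<Sum>i\<le>nh. ch i * y ^ i)" using PH[of y] y by (intro mult_left_mono) auto
    also have "\<dots> = exp_poly ch nh v" unfolding exp_poly_alt y_def ..
    finally show "indicator {..1} v \<le> exp_poly ch nh v" .
    have "exp_poly ch nh v - exp_poly cl nl v = y * ((\<Sum>i\<le>nh. ch i * y ^ i) - (\<Sum>i\<le>nl. cl i * y ^ i))"
      unfolding exp_poly_alt y_def by (simp add: algebra_simps)
    also have "\<dots> \<le> y * ((hH y + 2 * \<delta>) - (hL y - 2 * \<delta>))"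
      using PH[of y] PL[of y] y by (intro mult_left_mono) auto
    also have "\<dots> = y * (hH y - hL y) + 4 * \<delta> * y" by (simp add: algebra_simps)
    also have "\<dots> \<le> indicator {a - \<eta>..a + \<eta>} y + 4 * \<delta> * y" using G3[OF y(1)] by simp
    finally show "exp_poly ch nh v - exp_poly cl nl v
        \<le> indicator {exp (- 1) - \<eta>..exp (- 1) + \<eta>} (exp (- v)) + 4 * \<delta> * exp (- v)"
      unfolding a_def y_def .
  qed
qed

text \<open>The window where the brackets differ, seen in the variable \<open>v\<close>: an interval of length
  \<open>O(\<eta>)\<close> inside \<open>[1/2,\<infinity>)\<close>, where the weight \<open>v powr (c - 1)\<close> is at most \<open>2\<close>.\<close>
lemma exp_window_bound:
  fixes c \<eta> :: real
  assumes \<eta>: "0 < \<eta>" "\<eta> \<le> exp (- 1) / 2" and c: "0 < c" "c \<le> 1"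
  obtains v1 v2 where "v1 \<le> v2" "v2 - v1 \<le> 4 * \<eta> / exp (- 1)"
    and "\<And>v. 0 \<le> v \<Longrightarrow> indicator {exp (- 1) - \<eta>..exp (- 1) + \<eta>} (exp (- v)) * v powr (c - 1)
          \<le> 2 * indicator {v1..v2} v"
proof -
  define a :: real where "a = exp (- 1)"
  have a: "0 < a" unfolding a_def by simp
  define v1 where "v1 = - ln (a + \<eta>)"
  define v2 where "v2 = - ln (a - \<eta>)"
  have amh: "a - \<eta> > 0" using \<eta> a unfolding a_def by simp
  have v12: "v1 \<le> v2" unfolding v1_def v2_def using amh \<eta> by simp
  have v1h: "v1 \<ge> 1 / 2"
  proof -
    have "3 / 2 \<le> exp (1 / 2 :: real)" using exp_ge_add_one_self[of "1/2::real"] by simp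
    hence "3 / 2 * exp (- 1) \<le> exp (1 / 2) * exp (- 1 :: real)" by (intro mult_right_mono) auto
    also have "\<dots> = exp (- 1 / 2)" by (simp add: exp_add[symmetric])
    finally have "a + \<eta> \<le> exp (- 1 / 2)" using \<eta> unfolding a_def by simp
    hence "ln (a + \<eta>) \<le> ln (exp (- 1 / 2))" using a \<eta> by (subst ln_le_cancel_iff) auto
    thus ?thesis unfolding v1_def by simp
  qed
  have "v2 - v1 = ln ((a + \<eta>) / (a - \<eta>))" unfolding v1_def v2_def using amh \<eta> by (simp add: ln_div)
  also have "\<dots> \<le> (a + \<eta>) / (a - \<eta>) - 1" using amh \<eta> by (intro ln_le_minus_one) auto
  also have "\<dots> = 2 * \<eta> / (a - \<eta>)" using amh by (simp add: field_simps)
  also have "\<dots> \<le> 2 * \<eta> / (a / 2)" using amh \<eta> a unfolding a_def by (intro divide_left_mono) auto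
  finally have v21: "v2 - v1 \<le> 4 * \<eta> / a" by simp
  show ?thesis
  proof (rule that[OF v12 v21[unfolded a_def]])
    fix v :: real assume v: "0 \<le> v"
    show "indicator {exp (- 1) - \<eta>..exp (- 1) + \<eta>} (exp (- v)) * v powr (c - 1) \<le> 2 * indicator {v1..v2} v"
    proof (cases "exp (- v) \<in> {a - \<eta>..a + \<eta>}")
      case True
      hence "ln (exp (- v)) \<le> ln (a + \<eta>)" "ln (a - \<eta>) \<le> ln (exp (- v))"
        using amh \<eta> by (simp_all only: atLeastAtMost_iff ln_le_cancel_iff exp_gt_zero)
      hence vv: "v1 \<le> v" "v \<le> v2" unfolding v1_def v2_def by auto
      have "v powr (c - 1) \<le> (1 / 2) powr (c - 1)" using vv v1h c by (intro powr_mono2') auto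
      also have "(1 / 2 :: real) powr (c - 1) = 2 powr (1 - c)"
        by (simp add: powr_divide powr_minus_divide[symmetric] powr_minus)
      also have "\<dots> \<le> 2 powr 1" using c by (intro powr_mono) auto
      finally show ?thesis using True vv unfolding a_def by simp
    qed (simp add: a_def)
  qed
qed

lemma moment_gap_bound:
  fixes c \<eta> \<delta> :: real
  assumes c: "0 < c" "c \<le> 1" and \<eta>: "0 < \<eta>" "\<eta> \<le> exp (- 1) / 2"
    and i: "integrable lborel (moment_density c \<phi>)" "integrable lborel (moment_density c \<psi>)"
    and gap: "\<And>v. 0 \<le> v \<Longrightarrow> \<phi> v - \<psi> v \<le> indicator {exp (- 1) - \<eta>..exp (- 1) + \<eta>} (exp (- v)) + 4 * \<delta> * exp (- v)"
  shows "moment c \<phi> - moment c \<psi> \<le> 8 * \<eta> / exp (- 1) + 4 * \<delta> * Gamma c"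
proof -
  obtain v1 v2 where v12: "v1 \<le> v2" "v2 - v1 \<le> 4 * \<eta> / exp (- 1)"
    and win: "\<And>v. 0 \<le> v \<Longrightarrow> indicator {exp (- 1) - \<eta>..exp (- 1) + \<eta>} (exp (- v)) * v powr (c - 1)
        \<le> 2 * indicator {v1..v2} v"
    using exp_window_bound[OF \<eta> c] by blast
  define B where "B v = 2 * indicator {v1..v2} v + 4 * \<delta> * moment_density c (\<lambda>v. exp (- 1 * v)) v" for v
  have Ei: "integrable lborel (moment_density c (\<lambda>v. exp (- 1 * v)))" by (rule moment_exp(1)[OF c(1)]) simp
  have Ii: "integrable lborel (\<lambda>v::real. indicator {v1..v2} v :: real)"
    by (rule integrable_real_indicator) (auto simp: emeasure_lborel_Icc_eq)
  have Bi: "integrable lborel B" unfolding B_def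
    by (intro Bochner_Integration.integrable_add Bochner_Integration.integrable_mult_right Ii Ei)
  have DB: "moment_density c \<phi> v - moment_density c \<psi> v \<le> B v" for v
  proof (cases "0 \<le> v")
    case True
    have "moment_density c \<phi> v - moment_density c \<psi> v = (\<phi> v - \<psi> v) * v powr (c - 1)"
      unfolding moment_density_def using True by (simp add: algebra_simps)
    also have "\<dots> \<le> (indicator {exp (- 1) - \<eta>..exp (- 1) + \<eta>} (exp (- v)) + 4 * \<delta> * exp (- v)) * v powr (c - 1)"
      using gap[OF True] by (rule mult_right_mono) simp
    also have "\<dots> \<le> B v"
      using win[OF True] True unfolding B_def moment_density_def by (simp add: algebra_simps)
    finally show ?thesis .
  qed (simp add: B_def moment_density_def)
  have "moment c \<phi> - moment c \<psi> \<le> (\<integral>v. B v \<partial>lborel)"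
    unfolding moment_def using integral_mono[OF _ Bi DB] i by simp
  also have "(\<integral>v. B v \<partial>lborel) = 2 * (v2 - v1) + 4 * \<delta> * Gamma c"
    using Ii Ei moment_exp(2)[OF c(1), of 1] v12 by (simp add: B_def moment_def)
  finally show ?thesis using v12 by simp
qed

lemma exp_poly_sandwich:
  fixes c \<epsilon> :: real
  assumes c: "0 < c" "c \<le> 1" and e: "0 < \<epsilon>"
  obtains cl nl ch nh where "\<And>v. 0 \<le> v \<Longrightarrow> exp_poly cl nl v \<le> indicator {..1} v"
    and "\<And>v. 0 \<le> v \<Longrightarrow> indicator {..1} v \<le> exp_poly ch nh v"
    and "moment c (exp_poly ch nh) - moment c (exp_poly cl nl) < \<epsilon>"
proof -
  define a :: real where "a = exp (- 1)"
  have a: "0 < a" unfolding a_def by simp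
  define \<eta> where "\<eta> = min (a / 2) (\<epsilon> * a / 32)"
  have \<eta>: "0 < \<eta>" "\<eta> \<le> a / 2" "\<eta> \<le> \<epsilon> * a / 32" unfolding \<eta>_def using a e by auto
  have G: "Gamma c > 0" using c by simp
  define \<delta> where "\<delta> = \<epsilon> / (16 * Gamma c)"
  have \<delta>: "0 < \<delta>" "4 * \<delta> * Gamma c = \<epsilon> / 4" unfolding \<delta>_def using e G by auto
  obtain cl nl ch nh where lo: "\<And>v. 0 \<le> v \<Longrightarrow> exp_poly cl nl v \<le> indicator {..1} v"
    and hi: "\<And>v. 0 \<le> v \<Longrightarrow> indicator {..1} v \<le> exp_poly ch nh v"
    and gap: "\<And>v. 0 \<le> v \<Longrightarrow> exp_poly ch nh v - exp_poly cl nl v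
          \<le> indicator {a - \<eta>..a + \<eta>} (exp (- v)) + 4 * \<delta> * exp (- v)"
    using exp_poly_brackets[OF \<eta>(1) \<delta>(1)] unfolding a_def by blast
  have "moment c (exp_poly ch nh) - moment c (exp_poly cl nl) \<le> 8 * \<eta> / a + 4 * \<delta> * Gamma c"
    using c \<eta>(1,2) moment_exp_poly(1)[OF c(1)] moment_exp_poly(1)[OF c(1)] gap
    unfolding a_def by (rule moment_gap_bound)
  also have "\<dots> < \<epsilon>"
  proof -
    have "8 * \<eta> / a \<le> \<epsilon> / 4" using \<eta>(3) a by (simp add: field_simps)
    thus ?thesis using \<delta>(2) e by linarith
  qed
  finally show ?thesis using lo hi that by blast
qed

lemma tendsto_by_brackets:
  fixes f :: "'a \<Rightarrow> real"
  assumes br: "\<And>\<epsilon>. 0 < \<epsilon> \<Longrightarrow> \<exists>g h a b. eventually (\<lambda>t. g t \<le> f t \<and> f t \<le> h t) F \<and>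
      (g \<longlongrightarrow> a) F \<and> (h \<longlongrightarrow> b) F \<and> a \<le> l \<and> l \<le> b \<and> b - a < \<epsilon>"
  shows "(f \<longlongrightarrow> l) F"
proof (rule order_tendstoI)
  fix y assume "y < l"
  then obtain g h a b where ev: "eventually (\<lambda>t. g t \<le> f t \<and> f t \<le> h t) F"
    and g: "(g \<longlongrightarrow> a) F" and ab: "l \<le> b" "b - a < l - y" using br[of "l - y"] by auto
  have "eventually (\<lambda>t. y < g t) F" using ab by (intro order_tendstoD(1)[OF g]) simp
  with ev show "eventually (\<lambda>t. y < f t) F" by eventually_elim auto
next
  fix y assume "l < y"
  then obtain g h a b where ev: "eventually (\<lambda>t. g t \<le> f t \<and> f t \<le> h t) F"
    and h: "(h \<longlongrightarrow> b) F" and ab: "a \<le> l" "b - a < y - l" using br[of "y - l"] by auto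
  have "eventually (\<lambda>t. h t < y) F" using ab by (intro order_tendstoD(2)[OF h]) simp
  with ev show "eventually (\<lambda>t. f t < y) F" by eventually_elim auto
qed

lemma powr_difference_quotient:
  fixes \<alpha> e :: real assumes e: "0 < e"
  obtains d where "0 < d" "\<And>h. h \<noteq> 0 \<Longrightarrow> \<bar>h\<bar> < d \<Longrightarrow> \<bar>((1 + h) powr \<alpha> - 1) / h - \<alpha>\<bar> < e"
proof -
  have "((\<lambda>z. z powr \<alpha>) has_real_derivative \<alpha> * 1 powr (\<alpha> - 1)) (at 1)"
    by (rule has_real_derivative_powr) simp
  hence "((\<lambda>h. ((1 + h) powr \<alpha> - 1 powr \<alpha>) / h) \<longlongrightarrow> \<alpha>) (at 0)"
    unfolding DERIV_def by simp
  from LIM_D[OF this e] that show ?thesis by auto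
qed

section \<open>The resolvent and its positivity\<close>

locale volterra_resolvent =
  fixes k r L :: "real \<Rightarrow> real" and \<alpha> a :: real
  assumes C1_int: "set_integrable lborel {0..} k"
    and C1_cont: "continuous_on {0..} k"
    and C1_pos: "\<And>t. t \<ge> 0 \<Longrightarrow> k t > 0"
    and C2: "convex_on {0..} (\<lambda>t. ln (tail_int k t))"
    and alpha: "0 < \<alpha>" "\<alpha> < 1"
    and L_sv: "slowly_varying L"
    and C3: "\<And>t. t > 0 \<Longrightarrow> tail_int k t = L t * t powr (- \<alpha>)"
    and a_def: "a = - (LBINT s:{0..}. k s)"
    and r0: "r 0 = 1"
    and r_eq: "\<And>t. t \<ge> 0 \<Longrightarrow>
       (r has_real_derivative (a * r t + (LBINT s:{0..t}. k (t - s) * r s))) (at t within {0..})"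
begin

definition lam :: "real \<Rightarrow> real" where "lam t = tail_int k t"

lemma lam_eq: "t > 0 \<Longrightarrow> lam t = L t * t powr (- \<alpha>)"
  using C3 lam_def by auto

lemma L_pos: "t \<ge> 0 \<Longrightarrow> L t > 0"
  using L_sv unfolding slowly_varying_def by auto

lemma k_nonneg: "0 \<le> t \<Longrightarrow> 0 \<le> k t"
  using C1_pos less_imp_le by blast

lemma k_integrable_on: "k integrable_on {0..t}"
  using C1_cont by (intro integrable_continuous_real) (auto elim: continuous_on_subset)

lemma lam_eq_diff: assumes "0 \<le> t" shows "lam t = lam 0 - integral {0..t} k"
proof -
  have i1: "set_integrable lborel {0..t} k" and i2: "set_integrable lborel {t<..} k"
    using assms by (auto intro: set_integrable_subset[OF C1_int])
  have "(LBINT s:{0..t} \<union> {t<..}. k s) = (LBINT s:{0..t}. k s) + (LBINT s:{t<..}. k s)"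
    by (rule set_integral_Un[OF _ i1 i2]) auto
  moreover have "{0..t} \<union> {t<..} = {0..}" using assms by auto
  moreover have "(LBINT s:{0..t}. k s) = integral {0..t} k"
    using set_borel_integral_eq_integral(2)[OF i1] .
  moreover have "(LBINT s:{t<..}. k s) = (LBINT s:{t..}. k s)"
  proof (rule set_integral_cong_set)
    show "set_borel_measurable lborel {t..} k" "set_borel_measurable lborel {t<..} k"
      using assms set_integrable_subset[OF C1_int, of "{t..}"] i2
      by (auto intro: borel_measurable_integrable simp: set_integrable_def set_borel_measurable_def)
    show "AE x in lborel. (x \<in> {t..}) = (x \<in> {t<..})"
      using AE_lborel_singleton[of t] by eventually_elim auto
  qed
  ultimately show ?thesis unfolding lam_def tail_int_def by simp
qed

lemma integral_k_nonneg: "0 \<le> integral {0..t} k"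
  using k_integrable_on by (rule integral_nonneg) (simp add: k_nonneg)

lemma lam_pos: assumes "0 \<le> t" shows "lam t > 0"
proof (cases "t = 0")
  case True
  have "lam 1 > 0" using lam_eq[of 1] L_pos[of 1] by simp
  thus ?thesis using True lam_eq_diff[of 1] integral_k_nonneg[of 1] by simp
qed (use assms lam_eq L_pos in simp)

lemma lam_antimono: assumes "0 \<le> s" "s \<le> t" shows "lam t \<le> lam s"
proof -
  have "integral {0..s} k \<le> integral {0..t} k"
    by (rule integral_subset_le) (use assms k_integrable_on k_nonneg in auto)
  thus ?thesis using lam_eq_diff[of s] lam_eq_diff[of t] assms by linarith
qed

lemma lam_nonneg: "0 \<le> t \<Longrightarrow> 0 \<le> lam t"
  using lam_pos[of t] by simp

lemma lam_le_lam0: "0 \<le> t \<Longrightarrow> lam t \<le> lam 0"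
  using lam_antimono by auto

lemma lam_has_derivative: assumes "0 \<le> x" "x \<le> b"
  shows "(lam has_real_derivative - k x) (at x within {0..b})"
proof -
  have "((\<lambda>x. integral {0..x} k) has_real_derivative k x) (at x within {0..b})"
    using C1_cont assms by (intro integral_has_real_derivative) (auto elim: continuous_on_subset)
  from DERIV_diff[OF DERIV_const[of "lam 0"] this]
  have "((\<lambda>x. lam 0 - integral {0..x} k) has_real_derivative (- k x)) (at x within {0..b})" by simp
  thus ?thesis
    by (rule has_field_derivative_transform_within[where d=1])
       (use assms in \<open>auto intro: lam_eq_diff[symmetric]\<close>)
qed

lemma lam_cont: "continuous_on {0..} lam"
  unfolding continuous_on_eq_continuous_within
proof
  fix x :: real assume x: "x \<in> {0..}"
  have "at x within {0..} = at x within {0..x + 1}"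
    by (rule at_within_nhd[where S="{x - 1<..<x + 1}"]) auto
  thus "continuous (at x within {0..}) lam"
    using lam_has_derivative[of x "x + 1"] x by (auto intro: DERIV_continuous)
qed

lemma lam_ratio_mono:
  assumes "0 \<le> u" "u \<le> v" "0 \<le> d" shows "lam (u + d) * lam v \<le> lam (v + d) * lam u"
proof (rule log_convex_ratio_mono[OF _ lam_pos assms])
  show "convex_on {0..} (\<lambda>t. ln (lam t))" unfolding lam_def by (rule C2)
qed

lemma a_eq: "a = - lam 0"
  using a_def unfolding lam_def tail_int_def by simp

lemma r_cont: "continuous_on {0..} r"
  unfolding continuous_on_eq_continuous_within using DERIV_continuous[OF r_eq] by auto

definition rho :: "real \<Rightarrow> real" where "rho t = lam 0 * r t - conv k r t"

lemma rho_cont: "continuous_on {0..} rho"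
  unfolding rho_def by (intro continuous_intros continuous_on_conv C1_cont r_cont)

lemma r_has_derivative: assumes "0 \<le> t" shows "(r has_real_derivative - rho t) (at t within {0..})"
proof -
  have "continuous_on {0..t} (\<lambda>s. k (t - s) * r s)"
    using C1_cont r_cont by (intro continuous_intros continuous_on_reflect) (auto elim: continuous_on_subset)
  hence "(LBINT s:{0..t}. k (t - s) * r s) = conv k r t"
    unfolding conv_def by (rule set_borel_integral_eq_integral(2)[OF borel_integrable_atLeastAtMost'])
  thus ?thesis using r_eq[OF assms] unfolding rho_def a_eq by (simp add: algebra_simps)
qed

lemma rho0: "rho 0 = lam 0"
  unfolding rho_def conv_def using r0 by simp

text \<open>The renewal equation \<open>\<rho> + lam * \<rho> = lam\<close>, obtained by integrating
  \<open>d/ds (lam (t - s) r s) = k (t - s) r s - lam (t - s) \<rho> s\<close> over \<open>[0,t]\<close>.\<close>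
lemma renewal_eq: assumes t: "0 \<le> t" shows "conv lam rho t = lam t - rho t"
proof -
  define G where "G s = lam (t - s) * r s" for s
  have dG: "(G has_real_derivative (lam (t - s) * (- rho s) + k (t - s) * r s)) (at s within {0..t})"
    if s: "s \<in> {0..t}" for s
  proof -
    have im: "(\<lambda>s. t - s) ` {0..t} = {0..t}"
    proof
      show "{0..t} \<subseteq> (\<lambda>s. t - s) ` {0..t}"
      proof
        fix y assume "y \<in> {0..t}" thus "y \<in> (\<lambda>s. t - s) ` {0..t}" by (intro image_eqI[of _ _ "t - y"]) auto
      qed
    qed auto
    have "(lam has_real_derivative - k (t - s)) (at ((\<lambda>s. t - s) s) within ((\<lambda>s. t - s) ` {0..t}))"
      unfolding im using lam_has_derivative[of "t - s" t] s by auto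
    from DERIV_image_chain[OF this DERIV_diff[OF DERIV_const DERIV_ident]]
    have "((\<lambda>s. lam (t - s)) has_real_derivative k (t - s)) (at s within {0..t})"
      by (simp add: o_def)
    moreover have "(r has_real_derivative - rho s) (at s within {0..t})"
      by (rule DERIV_subset[OF r_has_derivative]) (use s in auto)
    ultimately show ?thesis unfolding G_def using DERIV_mult' by fastforce
  qed
  have "((\<lambda>s. lam (t - s) * (- rho s) + k (t - s) * r s) has_integral (G t - G 0)) {0..t}"
    using t dG by (intro fundamental_theorem_of_calculus) (auto simp: has_real_derivative_iff_has_vector_derivative[symmetric])
  from has_integral_diff[OF has_integral_conv[OF C1_cont r_cont] this]
  have "((\<lambda>s. lam (t - s) * rho s) has_integral (lam t - rho t)) {0..t}"
    unfolding G_def rho_def using r0 by (simp add: algebra_simps)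
  thus ?thesis unfolding conv_def by (simp add: integral_unique)
qed

text \<open>Log-convexity of \<open>lam\<close> (C2) gives \<open>lam (T - s) \<le> (lam T / lam m) lam (m - s)\<close> for
  \<open>s \<le> m \<le> T\<close>; on \<open>[0,m]\<close>, where \<open>\<rho> \<ge> 0\<close>, this compares the renewal equation at \<open>T\<close> with
  the one at \<open>m\<close>.\<close>
lemma renewal_head_bound:
  assumes m: "0 \<le> m" "m \<le> T" and pos: "\<And>s. 0 \<le> s \<Longrightarrow> s \<le> m \<Longrightarrow> rho s \<ge> 0"
  shows "integral {0..m} (\<lambda>s. lam (T - s) * rho s) \<le> (lam T / lam m) * (lam m - rho m)"
proof -
  have lm: "lam m > 0" using lam_pos m by auto
  have "integral {0..m} (\<lambda>s. lam (T - s) * rho s) \<le> integral {0..m} (\<lambda>s. (lam T / lam m) * (lam (m - s) * rho s))"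
  proof (rule integral_le)
    show "(\<lambda>s. lam (T - s) * rho s) integrable_on {0..m}"
      by (rule integrable_on_subinterval[OF conv_integrable[OF lam_cont rho_cont]]) (use m in auto)
    show "(\<lambda>s. lam T / lam m * (lam (m - s) * rho s)) integrable_on {0..m}"
      using integrable_on_cmult_left[OF conv_integrable[OF lam_cont rho_cont], of "lam T / lam m"]
      by simp
    fix s assume s: "s \<in> {0..m}"
    have "lam (m - s + (T - m)) * lam m \<le> lam (m + (T - m)) * lam (m - s)"
      by (rule lam_ratio_mono) (use s m in auto)
    hence "lam (T - s) \<le> lam T / lam m * lam (m - s)" using lm by (simp add: field_simps)
    thus "lam (T - s) * rho s \<le> lam T / lam m * (lam (m - s) * rho s)"
      using pos[of s] s mult_right_mono by fastforce
  qed
  also have "\<dots> = (lam T / lam m) * (lam m - rho m)"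
    using renewal_eq[OF m(1)] unfolding conv_def integral_mult_right by simp
  finally show ?thesis .
qed

lemma kaluza_ineq:
  assumes m: "0 \<le> m" "m \<le> T" and pos: "\<And>s. 0 \<le> s \<Longrightarrow> s \<le> m \<Longrightarrow> rho s \<ge> 0"
    and S: "\<And>s. m \<le> s \<Longrightarrow> s \<le> T \<Longrightarrow> rho s \<le> S" and S0: "0 \<le> S"
  shows "rho T \<ge> (lam T / lam m) * rho m - lam 0 * (T - m) * S"
proof -
  have T: "0 \<le> T" using m by auto
  define h where "h s = lam (T - s) * rho s" for s
  have hint: "h integrable_on {0..T}" unfolding h_def by (rule conv_integrable[OF lam_cont rho_cont])
  have hint2: "h integrable_on {m..T}" by (rule integrable_on_subinterval[OF hint]) (use m in auto)
  have A: "integral {0..m} h \<le> (lam T / lam m) * (lam m - rho m)"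
    unfolding h_def by (rule renewal_head_bound[OF m pos])
  have "integral {m..T} h \<le> integral {m..T} (\<lambda>s. lam 0 * S)"
  proof (rule integral_le[OF hint2])
    fix s assume s: "s \<in> {m..T}"
    have l: "0 < lam (T - s)" "lam (T - s) \<le> lam 0" using s lam_pos lam_le_lam0 by auto
    show "h s \<le> lam 0 * S"
    proof (cases "rho s \<ge> 0")
      case True
      hence "h s \<le> lam 0 * rho s" unfolding h_def using l mult_right_mono by blast
      also have "\<dots> \<le> lam 0 * S" using S[of s] s lam_pos[of 0] by (intro mult_left_mono) auto
      finally show ?thesis .
    next
      case False
      hence "h s \<le> 0" unfolding h_def using l mult_pos_neg[of "lam (T - s)" "rho s"] by simp
      also have "0 \<le> lam 0 * S" using S0 lam_pos[of 0] by simp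
      finally show ?thesis .
    qed
  qed auto
  hence B: "integral {m..T} h \<le> lam 0 * S * (T - m)" using m by (simp add: algebra_simps)
  have "integral {0..T} h = integral {0..m} h + integral {m..T} h"
    using Henstock_Kurzweil_Integration.integral_combine[OF m hint] by simp
  moreover have "rho T = lam T - integral {0..T} h"
    using renewal_eq[OF T] unfolding conv_def h_def by simp
  moreover have "lam T - (lam T / lam m) * (lam m - rho m) = (lam T / lam m) * rho m"
    using lam_pos[of m] m by (simp add: field_simps)
  ultimately show ?thesis using A B by (simp add: algebra_simps)
qed

lemma rho_first_zero:
  assumes t1: "0 \<le> t1" "rho t1 \<le> 0"
  obtains T where "0 < T" "rho T \<le> 0" "\<And>s. 0 \<le> s \<Longrightarrow> s < T \<Longrightarrow> rho s > 0"
proof -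
  define Z where "Z = {0..t1} \<inter> rho -` {..0}"
  have Zc: "closed Z" unfolding Z_def
    by (rule continuous_closed_preimage) (auto intro: continuous_on_subset[OF rho_cont])
  have Zne: "Z \<noteq> {}" using t1 unfolding Z_def by auto
  have Zb: "bdd_below Z" unfolding Z_def by (rule bdd_belowI[of _ 0]) auto
  define T where "T = Inf Z"
  have "T \<in> Z" unfolding T_def by (rule closed_contains_Inf[OF Zne Zb Zc])
  hence T: "0 \<le> T" "rho T \<le> 0" unfolding Z_def by auto
  have before: "rho s > 0" if "0 \<le> s" "s < T" for s
  proof (rule ccontr)
    assume "\<not> rho s > 0"
    hence "s \<in> Z" using that \<open>T \<in> Z\<close> unfolding Z_def by auto
    hence "T \<le> s" unfolding T_def by (rule cInf_lower[OF _ Zb])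
    thus False using that by simp
  qed
  have "T \<noteq> 0" using T rho0 lam_pos[of 0] by auto
  hence "0 < T" using T by simp
  show ?thesis by (rule that[OF \<open>0 < T\<close> T(2) before])
qed

text \<open>At a first zero \<open>T\<close>, Kaluza's inequality applied at the maximum \<open>m\<close> of \<open>\<rho>\<close> on a short
  interval \<open>[T - \<delta>, T]\<close> gives \<open>\<rho> T \<ge> lam T / (2 lam 0) \<rho> m > 0\<close>, a contradiction.\<close>
lemma rho_pos: assumes "0 \<le> t" shows "rho t > 0"
proof (rule ccontr)
  assume "\<not> rho t > 0"
  then obtain T where Tp: "0 < T" and T: "rho T \<le> 0" and before: "\<And>s. 0 \<le> s \<Longrightarrow> s < T \<Longrightarrow> rho s > 0"
    using rho_first_zero[of t] assms by auto
  define l0 where "l0 = lam 0"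
  have l0: "l0 > 0" and lT: "lam T > 0" using lam_pos Tp unfolding l0_def by auto
  define \<delta> where "\<delta> = min T (lam T / (2 * l0^2))"
  have \<delta>: "\<delta> > 0" "\<delta> \<le> T" "\<delta> \<le> lam T / (2 * l0^2)" unfolding \<delta>_def using Tp lT l0 by auto
  have "\<exists>x\<in>{T - \<delta>..T}. \<forall>y\<in>{T - \<delta>..T}. rho y \<le> rho x"
    by (rule continuous_attains_sup) (use \<delta> continuous_on_subset[OF rho_cont] in auto)
  then obtain m where m: "m \<in> {T - \<delta>..T}" and mmax: "\<And>y. y \<in> {T - \<delta>..T} \<Longrightarrow> rho y \<le> rho m"
    by blast
  have rm: "rho m > 0" using mmax[of "T - \<delta>"] before[of "T - \<delta>"] \<delta> by auto
  have "m \<noteq> T" using T rm by auto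
  hence mT: "0 \<le> m" "m < T" using m \<delta> by auto
  have ineq: "rho T \<ge> (lam T / lam m) * rho m - lam 0 * (T - m) * rho m"
  proof (rule kaluza_ineq)
    show "0 \<le> m" "m \<le> T" using mT by auto
    show "0 \<le> rho s" if "0 \<le> s" "s \<le> m" for s using before[of s] that mT by simp
    show "rho s \<le> rho m" if "m \<le> s" "s \<le> T" for s using mmax m that by auto
    show "0 \<le> rho m" using rm by simp
  qed
  have lm: "0 < lam m" "lam m \<le> l0" using lam_pos lam_le_lam0 mT unfolding l0_def by auto
  have q1: "lam T / l0 \<le> lam T / lam m" using lm lT by (simp add: frac_le)
  have "l0 * (T - m) \<le> l0 * \<delta>" using m l0 by (intro mult_left_mono) auto
  also have "\<dots> \<le> l0 * (lam T / (2 * l0^2))" using \<delta> l0 by (intro mult_left_mono) auto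
  also have "\<dots> = lam T / (2 * l0)" using l0 by (simp add: power2_eq_square field_simps)
  finally have q2: "l0 * (T - m) \<le> lam T / (2 * l0)" .
  have "lam T / (2 * l0) = lam T / l0 - lam T / (2 * l0)" using l0 by (simp add: field_simps)
  also have "\<dots> \<le> lam T / lam m - l0 * (T - m)" using q1 q2 by linarith
  finally have "lam T / (2 * l0) * rho m \<le> (lam T / lam m - l0 * (T - m)) * rho m"
    using rm by (intro mult_right_mono) auto
  hence "lam T / (2 * l0) * rho m \<le> rho T" using ineq unfolding l0_def by (simp add: algebra_simps)
  moreover have "lam T / (2 * l0) * rho m > 0" using lT l0 rm by simp
  ultimately show False using T by simp
qed

lemma rho_nonneg: "0 \<le> t \<Longrightarrow> rho t \<ge> 0"
  using rho_pos[of t] by simp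

lemma rho_le_lam: assumes "0 \<le> t" shows "rho t \<le> lam t"
proof -
  have "conv lam rho t \<ge> 0" unfolding conv_def
  proof (rule integral_nonneg[OF conv_integrable[OF lam_cont rho_cont]])
    fix x assume "x \<in> {0..t}"
    thus "0 \<le> lam (t - x) * rho x" using lam_nonneg[of "t - x"] rho_nonneg[of x] by simp
  qed
  thus ?thesis using renewal_eq[OF assms] by simp
qed

lemma r_diff: assumes "0 \<le> s" "s \<le> t" shows "r t - r s = - integral {s..t} rho"
proof -
  have "((\<lambda>x. - rho x) has_integral (r t - r s)) {s..t}"
  proof (rule fundamental_theorem_of_calculus)
    fix x assume x: "x \<in> {s..t}"
    have "(r has_real_derivative - rho x) (at x within {s..t})"
      by (rule DERIV_subset[OF r_has_derivative]) (use x assms in auto)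
    thus "(r has_vector_derivative - rho x) (at x within {s..t})"
      by (simp add: has_real_derivative_iff_has_vector_derivative)
  qed (use assms in auto)
  hence "integral {s..t} (\<lambda>x. - rho x) = r t - r s" by (rule integral_unique)
  thus ?thesis by simp
qed

lemma r_eq_integral: "0 \<le> t \<Longrightarrow> r t = 1 - integral {0..t} rho"
  using r_diff[of 0 t] r0 by simp

lemma r_antimono: assumes "0 \<le> s" "s \<le> t" shows "r t \<le> r s"
proof -
  have "rho integrable_on {s..t}"
    by (rule integrable_continuous_real, rule continuous_on_subset[OF rho_cont]) (use assms in auto)
  hence "integral {s..t} rho \<ge> 0"
    by (rule integral_nonneg) (use rho_nonneg assms in auto)
  thus ?thesis using r_diff[OF assms] by simp
qed

lemma r_le1: "0 \<le> t \<Longrightarrow> r t \<le> 1"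
  using r_antimono[of 0 t] r0 by simp

definition Llam :: "real \<Rightarrow> real" where "Llam z = enn2real (laplace lam z)"
definition Lrho :: "real \<Rightarrow> real" where "Lrho z = enn2real (laplace rho z)"
definition Lr :: "real \<Rightarrow> real" where "Lr z = enn2real (laplace r z)"

lemma Llam_nonneg: "0 \<le> Llam z"
  unfolding Llam_def by simp

lemma laplace_lam: assumes "0 < z" shows "laplace lam z = ennreal (Llam z)"
proof -
  have "laplace lam z \<le> ennreal (lam 0 / z)"
    using laplace_bounded[OF lam_le_lam0 _ assms] lam_pos[of 0] by simp
  thus ?thesis unfolding Llam_def by (simp add: ennreal_enn2real_if_bounded)
qed

lemma laplace_renewal: "laplace rho z + laplace lam z * laplace rho z = laplace lam z"
proof -
  have "laplace (conv lam rho) z = laplace lam z * laplace rho z"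
    by (rule laplace_conv[OF lam_cont rho_cont lam_nonneg rho_nonneg])
  moreover have "laplace rho z + laplace (conv lam rho) z = laplace lam z"
  proof (rule laplace_add[OF rho_cont continuous_on_conv[OF lam_cont rho_cont]])
    show "\<And>x. 0 \<le> x \<Longrightarrow> 0 \<le> rho x" by (rule rho_nonneg)
    show "\<And>x. 0 \<le> x \<Longrightarrow> 0 \<le> conv lam rho x" using renewal_eq rho_le_lam by simp
    show "\<And>x. 0 \<le> x \<Longrightarrow> rho x + conv lam rho x = lam x" using renewal_eq by simp
  qed
  ultimately show ?thesis by simp
qed

lemma laplace_rho:
  assumes z: "0 < z" shows "laplace rho z = ennreal (Lrho z)" and "Lrho z = Llam z / (1 + Llam z)"
proof -
  have "laplace rho z \<le> ennreal (Llam z)"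
    using ennreal_le_of_add_eq[OF laplace_renewal[of z]] laplace_lam[OF z] by simp
  thus e: "laplace rho z = ennreal (Lrho z)"
    unfolding Lrho_def by (simp add: ennreal_enn2real_if_bounded)
  have "ennreal (Lrho z + Llam z * Lrho z) = ennreal (Llam z)"
    using laplace_renewal[of z] Llam_nonneg[of z] unfolding e laplace_lam[OF z]
    by (simp add: Lrho_def ennreal_mult[symmetric] ennreal_plus[symmetric] del: ennreal_plus)
  hence "Lrho z * (1 + Llam z) = Llam z"
    using Llam_nonneg[of z] by (subst (asm) ennreal_inj) (auto simp: Lrho_def algebra_simps)
  moreover have "1 + Llam z \<noteq> 0" using Llam_nonneg[of z] by linarith
  ultimately show "Lrho z = Llam z / (1 + Llam z)" by (simp add: eq_divide_eq)
qed

lemma Lrho_lt1: "0 < z \<Longrightarrow> Lrho z < 1"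
  using laplace_rho(2)[of z] Llam_nonneg[of z] by simp

text \<open>Since the Laplace transform of \<open>\<rho>\<close> stays below 1 and
  \<open>exp (- z t) \<integral>\<^sub>0\<^sup>t \<rho> \<le> L\<rho>(z)\<close>, letting \<open>z \<rightarrow> 0\<close> gives \<open>\<integral>\<^sub>0\<^sup>t \<rho> \<le> 1\<close>.\<close>
lemma integral_rho_le_laplace:
  assumes z: "0 < z" and t: "0 \<le> t"
  shows "exp (- z * t) * integral {0..t} rho \<le> Lrho z"
proof -
  define I where "I = integral {0..t} rho"
  have rint: "(rho has_integral I) {0..t}" unfolding I_def
    using rho_cont by (intro integrable_integral integrable_continuous_real) (auto elim: continuous_on_subset)
  have I0: "0 \<le> I" unfolding I_def by (rule integral_nonneg) (use rint rho_nonneg in auto)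
  have "(\<lambda>s. indicator {0..t} s *\<^sub>R rho s) \<in> borel_measurable borel"
    by (rule borel_measurable_continuous_on_indicator) (auto intro: continuous_on_subset[OF rho_cont])
  hence meas: "(\<lambda>s. ennreal (indicator {0..t} s * rho s)) \<in> borel_measurable lborel" by simp
  have "ennreal (exp (- z * t) * I) = ennreal (exp (- z * t)) * (\<integral>\<^sup>+ s. ennreal (indicator {0..t} s * rho s) \<partial>lborel)"
    using nn_integral_has_integral_lebesgue[OF _ rint] rho_nonneg I0 by (simp add: ennreal_mult)
  also have "\<dots> = (\<integral>\<^sup>+ s. ennreal (exp (- z * t)) * ennreal (indicator {0..t} s * rho s) \<partial>lborel)"
    using meas by (rule nn_integral_cmult[symmetric])
  also have "\<dots> \<le> laplace rho z" unfolding laplace_def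
  proof (rule nn_integral_mono)
    fix s
    show "ennreal (exp (- z * t)) * ennreal (indicator {0..t} s * rho s) \<le> ennreal (exp (- z * s) * extend0 rho s)"
    proof (cases "s \<in> {0..t}")
      case True
      hence "exp (- z * t) * rho s \<le> exp (- z * s) * rho s"
        using z rho_nonneg[of s] by (intro mult_right_mono) auto
      thus ?thesis using True rho_nonneg[of s] by (simp add: extend0_def ennreal_mult[symmetric] ennreal_leI)
    qed simp
  qed
  finally show ?thesis
    unfolding laplace_rho(1)[OF z] I_def using Lrho_lt1[OF z] by (simp add: Lrho_def)
qed

lemma integral_rho_le1: assumes t: "0 \<le> t" shows "integral {0..t} rho \<le> 1"
proof (rule ccontr)
  define I where "I = integral {0..t} rho"
  assume "\<not> integral {0..t} rho \<le> 1"
  hence I1: "I > 1" unfolding I_def by simp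
  hence tp: "t > 0" using t unfolding I_def by (cases "t = 0") auto
  define z where "z = ln I / (2 * t)"
  have zp: "z > 0" unfolding z_def using I1 tp by simp
  have "exp (- z * t) * I = exp (- z * t) * exp (ln I)" using I1 by simp
  also have "\<dots> = exp (ln I - z * t)" by (simp add: exp_add[symmetric])
  also have "ln I - z * t = ln I / 2" unfolding z_def using tp by (simp add: field_simps)
  finally have "exp (- z * t) * I > 1" using I1 by simp
  thus False using integral_rho_le_laplace[OF zp t] Lrho_lt1[OF zp] unfolding I_def by simp
qed

lemma r_nonneg: "0 \<le> t \<Longrightarrow> 0 \<le> r t"
  using r_eq_integral[of t] integral_rho_le1[of t] by simp

text \<open>\<open>r = 1 - 1 * \<rho>\<close> gives \<open>Lr z = (1 - L\<rho> z) / z = 1 / (z (1 + Llam z))\<close>.\<close>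
lemma Lr_eq: assumes z: "0 < z" shows "Lr z = 1 / (z * (1 + Llam z))"
proof -
  have c1: "continuous_on {0..} (\<lambda>_::real. 1::real)" by simp
  have conv1: "conv (\<lambda>_. 1) rho t = integral {0..t} rho" for t
    unfolding conv_def by simp
  have "laplace (conv (\<lambda>_. 1) rho) z = ennreal (1 / z) * ennreal (Lrho z)"
    using laplace_conv[OF c1 rho_cont _ rho_nonneg] laplace_one[OF z] laplace_rho(1)[OF z] by simp
  also have "\<dots> = ennreal (Lrho z / z)"
    using z by (subst ennreal_mult[symmetric]) (auto simp: Lrho_def)
  finally have e1: "laplace (conv (\<lambda>_. 1) rho) z = ennreal (Lrho z / z)" .
  have "laplace r z + laplace (conv (\<lambda>_. 1) rho) z = laplace (\<lambda>_. 1) z"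
    using r_cont continuous_on_conv[OF c1 rho_cont] r_nonneg
    by (rule laplace_add) (use conv1 r_eq_integral r_le1 in auto)
  hence e2: "laplace r z + ennreal (Lrho z / z) = ennreal (1 / z)" unfolding e1 laplace_one[OF z] .
  hence "laplace r z \<le> ennreal (1 / z)" by (rule ennreal_le_of_add_eq)
  hence fin: "laplace r z = ennreal (Lr z)" unfolding Lr_def by (simp add: ennreal_enn2real_if_bounded)
  have LP0: "0 \<le> Lrho z" unfolding Lrho_def by simp
  have "ennreal (Lr z + Lrho z / z) = ennreal (1 / z)"
    using e2 unfolding fin using LP0 z by (simp add: Lr_def ennreal_plus[symmetric] del: ennreal_plus)
  hence "Lr z + Lrho z / z = 1 / z"
    using LP0 z by (subst (asm) ennreal_inj) (auto simp: Lr_def)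
  hence "Lr z = (1 - Lrho z) / z" using z by (simp add: field_simps)
  also have "1 - Lrho z = 1 / (1 + Llam z)"
    using Llam_nonneg[of z] unfolding laplace_rho(2)[OF z] by (simp add: field_simps add_nonneg_eq_0_iff)
  finally show ?thesis by simp
qed

section \<open>Regular variation of the tail\<close>

lemma lam_ratio_tendsto:
  assumes x: "0 < x" shows "((\<lambda>t. lam (x * t) / lam t) \<longlongrightarrow> x powr - \<alpha>) at_top"
proof -
  have "((\<lambda>t. L (x * t) / L t * x powr - \<alpha>) \<longlongrightarrow> 1 * x powr - \<alpha>) at_top"
    using L_sv x unfolding slowly_varying_def by (intro tendsto_mult tendsto_const) auto
  moreover have "eventually (\<lambda>t. L (x * t) / L t * x powr - \<alpha> = lam (x * t) / lam t) at_top"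
    using eventually_gt_at_top[of 0]
  proof eventually_elim
    case (elim t)
    have "lam (x * t) / lam t = (L (x * t) * (x powr - \<alpha> * t powr - \<alpha>)) / (L t * t powr - \<alpha>)"
      using elim x by (simp add: lam_eq powr_mult)
    also have "\<dots> = L (x * t) / L t * x powr - \<alpha>" using elim by (simp add: field_simps)
    finally show ?case by simp
  qed
  ultimately show ?thesis by (simp add: tendsto_cong)
qed

text \<open>For \<open>\<beta> > \<alpha>\<close> regular variation gives \<open>lam (2 t) \<ge> 2 powr -\<beta> lam t\<close> for large \<open>t\<close>;
  iterated over dyadic scales this is a lower bound for \<open>lam (2^n y)\<close>.\<close>
lemma lam_dyadic_lower:
  fixes \<beta> :: real
  assumes "\<alpha> < \<beta>"
  obtains T0 where "0 < T0" and "\<And>y (n::nat). T0 \<le> y \<Longrightarrow> 2 powr (- \<beta> * n) * lam y \<le> lam (2 ^ n * y)"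
proof -
  have "2 powr - \<beta> < 2 powr - \<alpha>" using assms by simp
  hence "eventually (\<lambda>t. 2 powr - \<beta> < lam (2 * t) / lam t) at_top"
    by (rule order_tendstoD(1)[OF lam_ratio_tendsto, rotated]) simp
  then obtain T where T: "\<And>t. t \<ge> T \<Longrightarrow> 2 powr - \<beta> < lam (2 * t) / lam t"
    by (auto simp: eventually_at_top_linorder)
  define T0 where "T0 = max T 1"
  have T0: "0 < T0" unfolding T0_def by simp
  have step: "2 powr - \<beta> * lam t \<le> lam (2 * t)" if "T0 \<le> t" for t
    using T[of t] lam_pos[of t] that unfolding T0_def by (simp add: field_simps)
  have "2 powr (- \<beta> * n) * lam y \<le> lam (2 ^ n * y)" if y: "T0 \<le> y" for y and n :: nat
  proof (induction n)
    case (Suc n)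
    have "T0 \<le> 1 * y" using y by simp
    also have "\<dots> \<le> 2 ^ n * y" using y T0 by (intro mult_right_mono) auto
    finally have ge: "T0 \<le> 2 ^ n * y" .
    have "2 powr (- \<beta> * Suc n) * lam y = 2 powr - \<beta> * (2 powr (- \<beta> * n) * lam y)"
      by (simp add: powr_add[symmetric] algebra_simps)
    also have "\<dots> \<le> 2 powr - \<beta> * lam (2 ^ n * y)" using Suc.IH by (intro mult_left_mono) auto
    also have "\<dots> \<le> lam (2 * (2 ^ n * y))" by (rule step[OF ge])
    finally show ?case by (simp add: mult.assoc)
  qed simp
  with T0 show ?thesis by (rule that)
qed

text \<open>Potter's bound for large arguments: write \<open>w / y\<close> between consecutive powers of 2.\<close>
lemma potter_large:
  assumes "\<alpha> < \<beta>"
  obtains T0 where "0 < T0"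
    and "\<And>y w. T0 \<le> y \<Longrightarrow> y \<le> w \<Longrightarrow> lam y \<le> 2 powr \<beta> * (w / y) powr \<beta> * lam w"
proof -
  have b0: "0 < \<beta>" using assms alpha by simp
  obtain T0 where T0: "0 < T0"
    and iter: "\<And>y (n::nat). T0 \<le> y \<Longrightarrow> 2 powr (- \<beta> * n) * lam y \<le> lam (2 ^ n * y)"
    using lam_dyadic_lower[OF assms] by blast
  have "lam y \<le> 2 powr \<beta> * (w / y) powr \<beta> * lam w" if y: "T0 \<le> y" "y \<le> w" for y w
  proof -
    have yp: "y > 0" using y T0 by simp
    have q: "w / y \<ge> 1" using y yp by simp
    define n where "n = nat \<lfloor>log 2 (w / y)\<rfloor>"
    have lg: "log 2 (w / y) \<ge> 0" using q by simp
    have "2 powr real n \<le> 2 powr log 2 (w / y)" unfolding n_def using lg by simp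
    hence p1: "2 powr real n \<le> w / y" using q by simp
    have "w / y < 2 powr (real n + 1)"
    proof -
      have "2 powr log 2 (w / y) < 2 powr (real n + 1)" unfolding n_def using lg by simp
      thus ?thesis using q by simp
    qed
    also have "(2::real) powr (real n + 1) = 2 ^ (n + 1)"
      using powr_realpow[of 2 "n + 1"] by (simp add: add.commute)
    finally have "w < 2 ^ (n + 1) * y" using yp by (simp add: field_simps)
    hence "lam (2 ^ (n + 1) * y) \<le> lam w" using yp y by (intro lam_antimono) auto
    hence "2 powr (- (\<beta> * (n + 1))) * lam y \<le> lam w" using iter[OF y(1), of "n + 1"] by simp
    hence "2 powr (\<beta> * (n + 1)) * (2 powr (- (\<beta> * (n + 1))) * lam y) \<le> 2 powr (\<beta> * (n + 1)) * lam w"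
      by (intro mult_left_mono) auto
    hence "lam y \<le> 2 powr (\<beta> * (n + 1)) * lam w"
      by (simp add: powr_minus mult.assoc[symmetric])
    also have "2 powr (\<beta> * (n + 1)) = 2 powr \<beta> * (2 powr real n) powr \<beta>"
      by (simp add: powr_powr powr_add[symmetric] algebra_simps)
    also have "(2 powr real n) powr \<beta> \<le> (w / y) powr \<beta>" using p1 b0 by (intro powr_mono2) auto
    finally show ?thesis using lam_pos[of w] y yp by (simp add: mult_right_mono mult_left_mono)
  qed
  with T0 show ?thesis by (rule that)
qed

text \<open>Potter's bound: for \<open>\<beta> > \<alpha>\<close>, \<open>lam y \<le> C (w / y) powr \<beta> lam w\<close> whenever \<open>0 < y \<le> w\<close> and
  \<open>w\<close> is large; for small \<open>y\<close> use \<open>lam y \<le> lam 0\<close>.\<close>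
lemma potter:
  assumes "\<alpha> < \<beta>"
  obtains T0 C where "0 < T0" "0 < C"
    and "\<And>y w. 0 < y \<Longrightarrow> y \<le> w \<Longrightarrow> T0 \<le> w \<Longrightarrow> lam y \<le> C * (w / y) powr \<beta> * lam w"
proof -
  have b0: "0 < \<beta>" using assms alpha by simp
  obtain T0 where T0: "0 < T0"
    and large: "\<And>y w. T0 \<le> y \<Longrightarrow> y \<le> w \<Longrightarrow> lam y \<le> 2 powr \<beta> * (w / y) powr \<beta> * lam w"
    using potter_large[OF assms] by blast
  define C where "C = 2 powr \<beta> * lam 0 / lam T0"
  have lT0: "lam T0 > 0" "lam T0 \<le> lam 0" using lam_pos lam_le_lam0 T0 by auto
  have C1: "C \<ge> 2 powr \<beta>" unfolding C_def using lT0 by (simp add: field_simps)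
  have Cp: "C > 0" unfolding C_def using lT0 by simp
  have "lam y \<le> C * (w / y) powr \<beta> * lam w" if yw: "0 < y" "y \<le> w" "T0 \<le> w" for y w
  proof (cases "T0 \<le> y")
    case True
    have "lam y \<le> 2 powr \<beta> * (w / y) powr \<beta> * lam w" by (rule large[OF True yw(2)])
    also have "\<dots> \<le> C * (w / y) powr \<beta> * lam w"
      using C1 lam_pos[of w] yw by (intro mult_right_mono) auto
    finally show ?thesis .
  next
    case False
    have "lam y \<le> (lam 0 / lam T0) * lam T0" using yw lam_le_lam0 lT0 by simp
    also have "\<dots> \<le> (lam 0 / lam T0) * (2 powr \<beta> * (w / T0) powr \<beta> * lam w)"
      using large[of T0 w] yw lT0 by (intro mult_left_mono) auto
    also have "\<dots> \<le> (lam 0 / lam T0) * (2 powr \<beta> * (w / y) powr \<beta> * lam w)"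
      using False yw T0 b0 lT0 lam_pos[of w]
      by (intro mult_left_mono mult_right_mono powr_mono2) (auto simp: frac_le)
    also have "\<dots> = C * (w / y) powr \<beta> * lam w" unfolding C_def by simp
    finally show ?thesis .
  qed
  with T0 Cp show ?thesis by (rule that)
qed

text \<open>Iterating \<open>lam (2 t) \<le> q lam t\<close> with \<open>2 powr -\<alpha> < q < 1\<close> shows \<open>lam \<longrightarrow> 0\<close>.\<close>
lemma lam_tendsto_0: "(lam \<longlongrightarrow> 0) at_top"
proof -
  define q where "q = (1 + 2 powr - \<alpha>) / 2"
  have a2: "2 powr - \<alpha> < 1" using alpha powr_less_mono[of "- \<alpha>" 0 2] by simp
  have q: "2 powr - \<alpha> < q" "q < 1" "0 < q"
    unfolding q_def using a2 by (simp_all add: add_pos_pos)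
  have "eventually (\<lambda>t. lam (2 * t) / lam t < q) at_top"
    using order_tendstoD(2)[OF lam_ratio_tendsto[of 2] q(1)] by simp
  then obtain T' where T': "\<And>t. t \<ge> T' \<Longrightarrow> lam (2 * t) / lam t < q"
    by (auto simp: eventually_at_top_linorder)
  define T where "T = max T' 1"
  have T: "T \<ge> 1" "T \<ge> T'" unfolding T_def by auto
  have step: "lam (2 * t) \<le> q * lam t" if "t \<ge> T" for t
    using T'[of t] lam_pos[of t] that T by (simp add: field_simps)
  have iter: "lam (2 ^ n * T) \<le> q ^ n * lam T" for n
  proof (induction n)
    case (Suc n)
    have "T \<le> 2 ^ n * T" using T by simp
    hence "lam (2 * (2 ^ n * T)) \<le> q * lam (2 ^ n * T)" by (rule step)
    also have "\<dots> \<le> q * (q ^ n * lam T)" using Suc.IH q by (intro mult_left_mono) auto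
    finally show ?case by (simp add: mult.assoc)
  qed simp
  show ?thesis
  proof (rule order_tendstoI)
    fix e :: real assume e: "e < 0"
    show "eventually (\<lambda>t. e < lam t) at_top"
      using eventually_ge_at_top[of 0] by eventually_elim (use lam_pos e in force)
  next
    fix e :: real assume e: "0 < e"
    have lT: "lam T > 0" using lam_pos T by auto
    obtain n where n: "q ^ n < e / lam T" using real_arch_pow_inv[of "e / lam T" q] e lT q by auto
    show "eventually (\<lambda>t. lam t < e) at_top"
      using eventually_ge_at_top[of "2 ^ n * T"]
    proof eventually_elim
      case (elim t)
      have "lam t \<le> lam (2 ^ n * T)" using elim T by (intro lam_antimono) auto
      also have "\<dots> \<le> q ^ n * lam T" by (rule iter)
      also have "\<dots> < e" using n lT by (simp add: field_simps)
      finally show ?case .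
    qed
  qed
qed

text \<open>Potter's bound with \<open>y = T0\<close> fixed gives \<open>lam w \<ge> c w powr -\<beta>\<close> for large \<open>w\<close>.\<close>
lemma lam_power_lower_bound:
  assumes "\<alpha> < \<beta>"
  obtains T0 c where "0 < T0" "0 < c" "\<And>t. T0 \<le> t \<Longrightarrow> c * t powr - \<beta> \<le> lam t"
proof -
  obtain T0 C where T0: "0 < T0" and C: "0 < C"
    and P: "\<And>y w. 0 < y \<Longrightarrow> y \<le> w \<Longrightarrow> T0 \<le> w \<Longrightarrow> lam y \<le> C * (w / y) powr \<beta> * lam w"
    using potter[OF assms] by blast
  define c where "c = lam T0 * T0 powr \<beta> / C"
  have "c * t powr - \<beta> \<le> lam t" if t: "T0 \<le> t" for t
  proof -
    have "lam T0 \<le> C * (t powr \<beta> / T0 powr \<beta>) * lam t"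
      using P[of T0 t] T0 t by (simp add: powr_divide)
    thus ?thesis using C T0 t unfolding c_def by (simp add: field_simps powr_minus)
  qed
  moreover have "0 < c" unfolding c_def using lam_pos T0 C by auto
  ultimately show ?thesis using T0 that by blast
qed

lemma t_lam_tendsto_infinity: "filterlim (\<lambda>t. t * lam t) at_top at_top"
proof -
  define \<beta> where "\<beta> = (1 + \<alpha>) / 2"
  have b: "\<alpha> < \<beta>" "\<beta> < 1" unfolding \<beta>_def using alpha by auto
  obtain T0 c where T0: "0 < T0" and c: "0 < c" and lb: "\<And>t. T0 \<le> t \<Longrightarrow> c * t powr - \<beta> \<le> lam t"
    using lam_power_lower_bound[OF b(1)] by blast
  have "filterlim (\<lambda>t. c * t powr (1 - \<beta>)) at_top at_top"
    using b by (intro filterlim_tendsto_pos_mult_at_top[OF tendsto_const c real_powr_at_top]) auto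
  moreover have "eventually (\<lambda>t. c * t powr (1 - \<beta>) \<le> t * lam t) at_top"
    using eventually_ge_at_top[of T0]
  proof eventually_elim
    case (elim t)
    have "c * t powr (1 - \<beta>) = t * (c * t powr - \<beta>)"
      using elim T0 by (simp add: powr_diff powr_minus field_simps)
    also have "\<dots> \<le> t * lam t" using lb[OF elim] elim T0 by (intro mult_left_mono) auto
    finally show ?case .
  qed
  ultimately show ?thesis by (rule filterlim_at_top_mono)
qed

section \<open>The Abelian step\<close>

text \<open>After the substitution \<open>u = t x\<close>, \<open>Llam (1/t) / (t lam t)\<close> is the integral of the
  following function of \<open>x\<close>; it converges pointwise to \<open>exp (-x) x powr -\<alpha>\<close>.\<close>
definition abel_integrand :: "real \<Rightarrow> real \<Rightarrow> real" where
  "abel_integrand t x = exp (- x) * extend0 lam (t * x) / lam t"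

lemma Llam_rescaled:
  assumes t: "0 < t" shows "Llam (1 / t) / (t * lam t) = (\<integral>x. abel_integrand t x \<partial>lborel)"
proof -
  have "Llam (1 / t) = (\<integral>u. exp (- (1 / t) * u) * extend0 lam u \<partial>lborel)"
    unfolding Llam_def by (rule laplace_as_integral[OF lam_cont lam_nonneg])
  also have "\<dots> = \<bar>t\<bar> *\<^sub>R (\<integral>x. exp (- (1 / t) * (0 + t * x)) * extend0 lam (0 + t * x) \<partial>lborel)"
    by (rule lborel_integral_real_affine) (use t in auto)
  also have "\<dots> = t * (\<integral>x. exp (- x) * extend0 lam (t * x) \<partial>lborel)"
    using t by simp
  finally show ?thesis using t lam_pos[of t] by (simp add: abel_integrand_def)
qed

lemma abel_integrand_tendsto:
  assumes "x \<noteq> 0"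
  shows "((\<lambda>t. abel_integrand t x) \<longlongrightarrow> indicator {0..} x * (x powr ((1 - \<alpha>) - 1) / exp x)) at_top"
proof (cases "x > 0")
  case True
  have "((\<lambda>t. exp (- x) * (lam (x * t) / lam t)) \<longlongrightarrow> exp (- x) * x powr - \<alpha>) at_top"
    by (intro tendsto_mult tendsto_const lam_ratio_tendsto True)
  moreover have "eventually (\<lambda>t. exp (- x) * (lam (x * t) / lam t) = abel_integrand t x) at_top"
    using eventually_gt_at_top[of 0]
    by eventually_elim (use True in \<open>simp add: abel_integrand_def extend0_def mult.commute\<close>)
  moreover have "exp (- x) * x powr - \<alpha> = indicator {0..} x * (x powr ((1 - \<alpha>) - 1) / exp x)"
    using True by (simp add: exp_minus field_simps)
  ultimately show ?thesis by (simp add: tendsto_cong)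
next
  case False
  hence x: "x < 0" using assms by simp
  have "eventually (\<lambda>t. 0 = abel_integrand t x) at_top"
    using eventually_gt_at_top[of 0]
  proof eventually_elim
    case (elim t)
    hence "t * x < 0" using x by (simp add: mult_pos_neg)
    thus ?case by (simp add: abel_integrand_def extend0_def)
  qed
  thus ?thesis using x by (simp add: tendsto_cong)
qed

text \<open>Potter's bound (\<open>x < 1\<close>) and monotonicity (\<open>x \<ge> 1\<close>) give an integrable majorant.\<close>
lemma abel_integrand_bound:
  assumes P: "\<And>y w. 0 < y \<Longrightarrow> y \<le> w \<Longrightarrow> T0 \<le> w \<Longrightarrow> lam y \<le> C * (w / y) powr \<beta> * lam w"
    and T0: "0 < T0" and C: "0 < C" and t: "T0 \<le> t" and x: "0 < x"
  shows "abel_integrand t x \<le> exp (- x) * (C * x powr - \<beta> + 1)"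
proof -
  have tp: "0 < t" and lt: "0 < lam t" using t T0 lam_pos by auto
  have "lam (t * x) / lam t \<le> C * x powr - \<beta> + 1"
  proof (cases "x \<ge> 1")
    case True
    hence "lam (t * x) \<le> lam t" using tp by (intro lam_antimono) auto
    hence "lam (t * x) / lam t \<le> 1" using lt by simp
    moreover have "0 \<le> C * x powr - \<beta>" using C by simp
    ultimately show ?thesis by linarith
  next
    case False
    hence "lam (t * x) \<le> C * (t / (t * x)) powr \<beta> * lam t" using P[of "t * x" t] tp x t by simp
    also have "(t / (t * x)) powr \<beta> = x powr - \<beta>" using tp x by (simp add: powr_minus_divide powr_divide)
    finally have "lam (t * x) / lam t \<le> C * x powr - \<beta>" using lt by (simp add: field_simps)
    thus ?thesis by linarith
  qed
  hence "exp (- x) * (lam (t * x) / lam t) \<le> exp (- x) * (C * x powr - \<beta> + 1)"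
    by (rule mult_left_mono) simp
  thus ?thesis unfolding abel_integrand_def extend0_def using tp x by simp
qed

lemma abel_integrand_majorant:
  assumes P: "\<And>y w. 0 < y \<Longrightarrow> y \<le> w \<Longrightarrow> T0 \<le> w \<Longrightarrow> lam y \<le> C * (w / y) powr \<beta> * lam w"
    and T0: "0 < T0" and C: "0 < C" and t: "T0 \<le> t" and x: "x \<noteq> 0"
  shows "norm (abel_integrand t x)
    \<le> C * (indicator {0..} x * (x powr ((1 - \<beta>) - 1) / exp x)) + indicator {0..} x * exp (- 1 * x)"
proof (cases "x > 0")
  case True
  have "0 \<le> abel_integrand t x" unfolding abel_integrand_def extend0_def
    using lam_pos[of t] lam_pos[of "t * x"] t T0 True by simp
  moreover have "abel_integrand t x \<le> exp (- x) * (C * x powr - \<beta> + 1)"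
    using P T0 C t True by (rule abel_integrand_bound)
  moreover have "exp (- x) * (C * x powr - \<beta> + 1) = C * (x powr ((1 - \<beta>) - 1) / exp x) + exp (- 1 * x)"
    by (simp add: exp_minus divide_inverse algebra_simps)
  ultimately show ?thesis using True by simp
next
  case False
  hence "t * x < 0" using x t T0 by (simp add: mult_pos_neg)
  thus ?thesis using C unfolding abel_integrand_def extend0_def by simp
qed

lemma Llam_asymp: "((\<lambda>t. Llam (1 / t) / (t * lam t)) \<longlongrightarrow> Gamma (1 - \<alpha>)) at_top"
proof -
  note [measurable] = extend0_measurable[OF lam_cont]
  define \<beta> where "\<beta> = (1 + \<alpha>) / 2"
  have b: "\<alpha> < \<beta>" "\<beta> < 1" unfolding \<beta>_def using alpha by auto
  obtain T0 C where T0: "0 < T0" and C: "0 < C"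
    and P: "\<And>y w. 0 < y \<Longrightarrow> y \<le> w \<Longrightarrow> T0 \<le> w \<Longrightarrow> lam y \<le> C * (w / y) powr \<beta> * lam w"
    using potter[OF b(1)] by blast
  define f where "f x = indicator {0..} x * (x powr ((1 - \<alpha>) - 1) / exp x)" for x :: real
  define w where "w x = C * (indicator {0..} x * (x powr ((1 - \<beta>) - 1) / exp x))
      + indicator {0..} x * exp (- 1 * x)" for x :: real
  have "integrable lborel (\<lambda>x. indicator {0..} x * (x powr ((1 - \<beta>) - 1) / exp x))"
    using b by (intro Gamma_integral_lborel(1)) simp
  moreover have "integrable lborel (\<lambda>x::real. indicator {0..} x * exp (- 1 * x))"
    by (rule integrable_exp_half_line) simp
  ultimately have wi: "integrable lborel w" unfolding w_def
    by (intro Bochner_Integration.integrable_add Bochner_Integration.integrable_mult_right)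
  have lim: "AE x in lborel. ((\<lambda>t. abel_integrand t x) \<longlongrightarrow> f x) at_top"
    using AE_lborel_singleton[of 0] unfolding f_def by eventually_elim (rule abel_integrand_tendsto)
  have dom: "\<forall>\<^sub>F t in at_top. AE x in lborel. norm (abel_integrand t x) \<le> w x"
    using eventually_ge_at_top[of T0]
  proof eventually_elim
    case (elim t)
    note t = this
    show ?case using AE_lborel_singleton[of 0]
    proof eventually_elim
      case (elim x)
      show ?case unfolding w_def using P T0 C t elim by (rule abel_integrand_majorant)
    qed
  qed
  have fm: "f \<in> borel_measurable lborel" unfolding f_def by measurable
  have sm: "abel_integrand t \<in> borel_measurable lborel" for t
    unfolding abel_integrand_def by measurable
  have "((\<lambda>t. \<integral>x. abel_integrand t x \<partial>lborel) \<longlongrightarrow> (\<integral>x. f x \<partial>lborel)) at_top"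
    by (rule integral_dominated_convergence_at_top[OF fm sm wi lim dom])
  moreover have "(\<integral>x. f x \<partial>lborel) = Gamma (1 - \<alpha>)"
    unfolding f_def by (rule Gamma_integral_lborel(2)) (use alpha in auto)
  moreover have "eventually (\<lambda>t. (\<integral>x. abel_integrand t x \<partial>lborel) = Llam (1 / t) / (t * lam t)) at_top"
    using eventually_gt_at_top[of 0] by eventually_elim (simp add: Llam_rescaled)
  ultimately show ?thesis by (simp add: tendsto_cong)
qed

text \<open>Consequently, by \<open>Lr z = 1 / (z (1 + Llam z))\<close> and \<open>t lam t \<longrightarrow> \<infinity>\<close>:
  \<open>lam t Lr (s/t) \<longrightarrow> s powr -\<alpha> / \<Gamma>(1-\<alpha>)\<close>.\<close>
lemma Lr_asymp:
  assumes s: "0 < s" shows "((\<lambda>t. Lr (s / t) * lam t) \<longlongrightarrow> s powr - \<alpha> / Gamma (1 - \<alpha>)) at_top"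
proof -
  define x where "x = inverse s"
  have x: "0 < x" unfolding x_def using s by simp
  have tau: "filterlim (\<lambda>t. x * t) at_top at_top"
    by (rule filterlim_tendsto_pos_mult_at_top[OF tendsto_const x filterlim_ident])
  have A1: "((\<lambda>t. Llam (1 / (x * t)) / ((x * t) * lam (x * t))) \<longlongrightarrow> Gamma (1 - \<alpha>)) at_top"
    using filterlim_compose[OF Llam_asymp tau] by (simp add: o_def)
  have A2: "((\<lambda>t. inverse ((x * t) * lam (x * t))) \<longlongrightarrow> 0) at_top"
    by (rule tendsto_inverse_0_at_top) (use filterlim_compose[OF t_lam_tendsto_infinity tau] in \<open>simp add: o_def\<close>)
  have G: "Gamma (1 - \<alpha>) > 0" using alpha by simp
  define D where "D t = lam (x * t) / lam t * (inverse ((x * t) * lam (x * t))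
      + Llam (1 / (x * t)) / ((x * t) * lam (x * t)))" for t
  have "(D \<longlongrightarrow> x powr - \<alpha> * (0 + Gamma (1 - \<alpha>))) at_top"
    unfolding D_def using x by (intro tendsto_intros A1 A2 lam_ratio_tendsto)
  hence "((\<lambda>t. inverse (D t)) \<longlongrightarrow> inverse (x powr - \<alpha> * (0 + Gamma (1 - \<alpha>)))) at_top"
    using G x by (intro tendsto_inverse) auto
  moreover have "inverse (x powr - \<alpha> * (0 + Gamma (1 - \<alpha>))) = s powr - \<alpha> / Gamma (1 - \<alpha>)"
    unfolding x_def using s by (simp add: inverse_powr powr_minus divide_inverse)
  moreover have "eventually (\<lambda>t. inverse (D t) = Lr (s / t) * lam t) at_top"
    using eventually_gt_at_top[of 0]
  proof eventually_elim
    case (elim t)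
    have p: "lam (x * t) > 0" "lam t > 0" "x * t > 0" using lam_pos x elim by auto
    have d: "1 + Llam (1 / (x * t)) > 0" using Llam_nonneg[of "1 / (x * t)"] by linarith
    have "D t = (1 + Llam (1 / (x * t))) / (x * t * lam t)"
      unfolding D_def using p x elim by (simp add: field_simps)
    moreover have "s / t = 1 / (x * t)" unfolding x_def using s elim by (simp add: field_simps)
    hence "Lr (s / t) = 1 / ((1 / (x * t)) * (1 + Llam (1 / (x * t))))"
      using p by (simp add: Lr_eq)
    ultimately show ?case using p d by (simp add: field_simps)
  qed
  ultimately show ?thesis by (simp add: tendsto_cong)
qed

section \<open>Karamata's Tauberian step\<close>

definition kappa :: real where "kappa = 1 / (Gamma \<alpha> * Gamma (1 - \<alpha>))"

lemma kappa_pos: "kappa > 0"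
  unfolding kappa_def using alpha by simp

lemma kappa_eq: "kappa = sin (\<alpha> * pi) / pi"
proof -
  have "sin (pi * \<alpha>) > 0" using alpha by (intro sin_gt_zero) auto
  thus ?thesis unfolding kappa_def using Gamma_reflection_real[OF alpha] by (simp add: mult.commute)
qed

definition U :: "real \<Rightarrow> real" where "U t = integral {0..t} r"

text \<open>The \<open>r\<close>-mean of a test function \<open>\<phi>\<close> at scale \<open>t\<close>, normalised by \<open>lam t\<close>.  For
  \<open>\<phi> = indicator {..1}\<close> it is \<open>lam t * U t\<close>; for \<open>\<phi> v = exp (- m v)\<close> it is \<open>lam t * Lr (m/t)\<close>.\<close>
definition scaled_mean :: "(real \<Rightarrow> real) \<Rightarrow> real \<Rightarrow> real" where
  "scaled_mean \<phi> t = lam t * (\<integral>u. extend0 r u * \<phi> (u / t) \<partial>lborel)"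

lemma extend0_r_bound: "\<bar>extend0 r u\<bar> \<le> indicator {0..} u"
  unfolding extend0_def using r_nonneg r_le1 by (auto split: split_indicator)

lemma scaled_mean_indicator:
  assumes t: "0 < t"
  shows "integrable lborel (\<lambda>u. extend0 r u * indicator {..1} (u / t))"
    and "scaled_mean (indicator {..1}) t = lam t * U t"
proof -
  have eq: "(\<lambda>u. extend0 r u * indicator {..1} (u / t)) = (\<lambda>u. indicator {0..t} u *\<^sub>R r u)"
    by (rule ext) (use t in \<open>auto simp: extend0_def field_simps split: split_indicator\<close>)
  have si: "set_integrable lborel {0..t} r"
    by (rule borel_integrable_atLeastAtMost') (auto intro: continuous_on_subset[OF r_cont])
  thus "integrable lborel (\<lambda>u. extend0 r u * indicator {..1} (u / t))"
    unfolding eq by (simp add: set_integrable_def)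
  have "(\<integral>u. indicator {0..t} u *\<^sub>R r u \<partial>lborel) = integral {0..t} r"
    using set_borel_integral_eq_integral(2)[OF si] by (simp add: set_lebesgue_integral_def)
  thus "scaled_mean (indicator {..1}) t = lam t * U t"
    unfolding scaled_mean_def U_def eq by simp
qed

lemma integrable_r_exp:
  assumes t: "0 < t" and m: "0 < m"
  shows "integrable lborel (\<lambda>u. extend0 r u * exp (- m * (u / t)))"
proof (rule Bochner_Integration.integrable_bound[OF integrable_exp_half_line[of "m / t"]])
  note [measurable] = extend0_measurable[OF r_cont]
  show "0 < m / t" using t m by simp
  show "(\<lambda>u. extend0 r u * exp (- m * (u / t))) \<in> borel_measurable lborel" by measurable
  show "AE x in lborel. norm (extend0 r x * exp (- m * (x / t))) \<le> norm (indicator {0..} x * exp (- (m / t) * x))"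
    using extend0_r_bound by (auto simp: abs_mult split: split_indicator)
qed

lemma scaled_mean_exp_tendsto:
  assumes m: "0 < m"
  shows "((\<lambda>t. scaled_mean (\<lambda>v. exp (- m * v)) t) \<longlongrightarrow> kappa * moment \<alpha> (\<lambda>v. exp (- m * v))) at_top"
proof -
  have "Gamma \<alpha> \<noteq> 0" using Gamma_real_pos[OF alpha(1)] by simp
  hence "kappa * moment \<alpha> (\<lambda>v. exp (- m * v)) = m powr - \<alpha> / Gamma (1 - \<alpha>)"
    using moment_exp(2)[OF alpha(1) m] unfolding kappa_def by simp
  moreover have "eventually (\<lambda>t. Lr (m / t) * lam t = scaled_mean (\<lambda>v. exp (- m * v)) t) at_top"
    using eventually_gt_at_top[of 0]
  proof eventually_elim
    case (elim t)
    have "Lr (m / t) = (\<integral>u. exp (- (m / t) * u) * extend0 r u \<partial>lborel)"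
      unfolding Lr_def by (rule laplace_as_integral[OF r_cont r_nonneg])
    also have "\<dots> = (\<integral>u. extend0 r u * exp (- m * (u / t)) \<partial>lborel)"
      by (intro Bochner_Integration.integral_cong refl) (simp add: divide_inverse ac_simps)
    finally have "Lr (m / t) = (\<integral>u. extend0 r u * exp (- m * (u / t)) \<partial>lborel)" .
    thus ?case unfolding scaled_mean_def by simp
  qed
  ultimately show ?thesis using Lr_asymp[OF m] by (simp add: tendsto_cong)
qed

lemma scaled_mean_exp_poly:
  assumes t: "0 < t"
  shows "integrable lborel (\<lambda>u. extend0 r u * exp_poly cf n (u / t))"
    and "scaled_mean (exp_poly cf n) t = (\<Sum>i\<le>n. cf i * scaled_mean (\<lambda>v. exp (- (real i + 1) * v)) t)"
proof -
  have e: "(\<lambda>u. extend0 r u * exp_poly cf n (u / t))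
      = (\<lambda>u. \<Sum>i\<le>n. cf i * (extend0 r u * exp (- (real i + 1) * (u / t))))"
    unfolding exp_poly_def by (rule ext) (simp add: sum_distrib_left algebra_simps)
  have ii: "integrable lborel (\<lambda>u. cf i * (extend0 r u * exp (- (real i + 1) * (u / t))))" for i
    by (intro Bochner_Integration.integrable_mult_right integrable_r_exp t) simp
  show "integrable lborel (\<lambda>u. extend0 r u * exp_poly cf n (u / t))"
    unfolding e using ii by (intro Bochner_Integration.integrable_sum)
  show "scaled_mean (exp_poly cf n) t = (\<Sum>i\<le>n. cf i * scaled_mean (\<lambda>v. exp (- (real i + 1) * v)) t)"
    unfolding scaled_mean_def e using ii
    by (simp add: Bochner_Integration.integral_sum sum_distrib_left algebra_simps)
qed

lemma scaled_mean_exp_poly_tendsto: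
  "((\<lambda>t. scaled_mean (exp_poly cf n) t) \<longlongrightarrow> kappa * moment \<alpha> (exp_poly cf n)) at_top"
proof -
  have "((\<lambda>t. \<Sum>i\<le>n. cf i * scaled_mean (\<lambda>v. exp (- (real i + 1) * v)) t)
      \<longlongrightarrow> (\<Sum>i\<le>n. cf i * (kappa * moment \<alpha> (\<lambda>v. exp (- (real i + 1) * v))))) at_top"
    by (intro tendsto_sum tendsto_mult_left scaled_mean_exp_tendsto) simp
  moreover have "(\<Sum>i\<le>n. cf i * (kappa * moment \<alpha> (\<lambda>v. exp (- (real i + 1) * v)))) = kappa * moment \<alpha> (exp_poly cf n)"
  proof -
    have "cf i * (kappa * moment \<alpha> (\<lambda>v. exp (- (real i + 1) * v))) = kappa * (Gamma \<alpha> * (cf i * (real i + 1) powr - \<alpha>))" for i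
      using moment_exp(2)[OF alpha(1), of "real i + 1"] by simp
    hence "(\<Sum>i\<le>n. cf i * (kappa * moment \<alpha> (\<lambda>v. exp (- (real i + 1) * v))))
        = (\<Sum>i\<le>n. kappa * (Gamma \<alpha> * (cf i * (real i + 1) powr - \<alpha>)))"
      by (intro sum.cong refl)
    thus ?thesis unfolding moment_exp_poly(2)[OF alpha(1)] by (simp add: sum_distrib_left)
  qed
  moreover have "eventually (\<lambda>t. (\<Sum>i\<le>n. cf i * scaled_mean (\<lambda>v. exp (- (real i + 1) * v)) t)
      = scaled_mean (exp_poly cf n) t) at_top"
    using eventually_gt_at_top[of 0] by eventually_elim (simp add: scaled_mean_exp_poly(2))
  ultimately show ?thesis by (simp add: tendsto_cong)
qed

lemma scaled_mean_mono:
  assumes t: "0 < t" and i: "integrable lborel (\<lambda>u. extend0 r u * \<phi> (u / t))"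
    "integrable lborel (\<lambda>u. extend0 r u * \<psi> (u / t))"
    and le: "\<And>v. 0 \<le> v \<Longrightarrow> \<phi> v \<le> \<psi> v"
  shows "scaled_mean \<phi> t \<le> scaled_mean \<psi> t"
  unfolding scaled_mean_def
proof (rule mult_left_mono)
  show "(\<integral>u. extend0 r u * \<phi> (u / t) \<partial>lborel) \<le> (\<integral>u. extend0 r u * \<psi> (u / t) \<partial>lborel)"
  proof (rule integral_mono[OF i])
    fix u :: real
    show "extend0 r u * \<phi> (u / t) \<le> extend0 r u * \<psi> (u / t)"
      using le[of "u / t"] t r_nonneg[of u] by (cases "0 \<le> u") (auto simp: extend0_def intro: mult_left_mono)
  qed
qed (use lam_nonneg t in simp)

text \<open>The step \<open>indicator {..1}\<close> is bracketed by
  exponential polynomials whose \<open>r\<close>-means converge to \<open>kappa\<close> times their moments.\<close>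
lemma lam_U_tendsto: "((\<lambda>t. lam t * U t) \<longlongrightarrow> kappa / \<alpha>) at_top"
proof (rule tendsto_by_brackets)
  fix \<epsilon> :: real assume e: "0 < \<epsilon>"
  obtain cl nl ch nh where lo: "\<And>v. 0 \<le> v \<Longrightarrow> exp_poly cl nl v \<le> indicator {..1} v"
    and hi: "\<And>v. 0 \<le> v \<Longrightarrow> indicator {..1} v \<le> exp_poly ch nh v"
    and gap: "moment \<alpha> (exp_poly ch nh) - moment \<alpha> (exp_poly cl nl) < \<epsilon> / kappa"
    using exp_poly_sandwich[OF alpha(1) less_imp_le[OF alpha(2)], of "\<epsilon> / kappa"] e kappa_pos
    by (metis divide_pos_pos)
  have "moment \<alpha> (exp_poly cl nl) \<le> moment \<alpha> (indicator {..1})"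
    "moment \<alpha> (indicator {..1}) \<le> moment \<alpha> (exp_poly ch nh)"
    using lo hi moment_exp_poly(1)[OF alpha(1)] moment_indicator_unit(1)[OF alpha(1)]
    by (auto intro!: moment_mono)
  hence m: "moment \<alpha> (exp_poly cl nl) \<le> 1 / \<alpha>" "1 / \<alpha> \<le> moment \<alpha> (exp_poly ch nh)"
    unfolding moment_indicator_unit(2)[OF alpha(1)] .
  have "kappa * moment \<alpha> (exp_poly cl nl) \<le> kappa * (1 / \<alpha>)"
    using m(1) kappa_pos by (intro mult_left_mono) simp_all
  moreover have "kappa * (1 / \<alpha>) \<le> kappa * moment \<alpha> (exp_poly ch nh)"
    using m(2) kappa_pos by (intro mult_left_mono) simp_all
  ultimately have "kappa * moment \<alpha> (exp_poly cl nl) \<le> kappa / \<alpha>" "kappa / \<alpha> \<le> kappa * moment \<alpha> (exp_poly ch nh)"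
    by simp_all
  moreover have "kappa * moment \<alpha> (exp_poly ch nh) - kappa * moment \<alpha> (exp_poly cl nl) < \<epsilon>"
    using gap kappa_pos by (simp add: right_diff_distrib[symmetric] pos_less_divide_eq mult.commute)
  moreover have "eventually (\<lambda>t. scaled_mean (exp_poly cl nl) t \<le> lam t * U t \<and> lam t * U t \<le> scaled_mean (exp_poly ch nh) t) at_top"
    using eventually_gt_at_top[of 0]
  proof eventually_elim
    case (elim t)
    show ?case
      unfolding scaled_mean_indicator(2)[OF elim, symmetric]
      using lo hi scaled_mean_exp_poly(1)[OF elim] scaled_mean_indicator(1)[OF elim]
      by (auto intro!: scaled_mean_mono[OF elim])
  qed
  ultimately show "\<exists>g h a b. eventually (\<lambda>t. g t \<le> lam t * U t \<and> lam t * U t \<le> h t) at_top \<and>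
      (g \<longlongrightarrow> a) at_top \<and> (h \<longlongrightarrow> b) at_top \<and> a \<le> kappa / \<alpha> \<and> kappa / \<alpha> \<le> b \<and> b - a < \<epsilon>"
    using scaled_mean_exp_poly_tendsto by blast
qed

section \<open>Monotone density and the conclusions\<close>

lemma U_increment_bounds:
  assumes "0 \<le> t" "t \<le> s"
  shows "(s - t) * r s \<le> U s - U t" and "U s - U t \<le> (s - t) * r t"
proof -
  have ri: "r integrable_on {0..s}" by (rule integrable_continuous_real, rule continuous_on_subset[OF r_cont]) auto
  have "U t + integral {t..s} r = U s"
    unfolding U_def by (rule Henstock_Kurzweil_Integration.integral_combine[OF assms ri])
  hence e: "U s - U t = integral {t..s} r" by simp
  have ri2: "r integrable_on {t..s}" by (rule integrable_on_subinterval[OF ri]) (use assms in auto)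
  have "integral {t..s} (\<lambda>_. r s) \<le> integral {t..s} r"
    by (rule integral_le[OF _ ri2]) (use assms r_antimono in auto)
  thus "(s - t) * r s \<le> U s - U t" unfolding e using assms by simp
  have "integral {t..s} r \<le> integral {t..s} (\<lambda>_. r t)"
    by (rule integral_le[OF ri2]) (use assms r_antimono in auto)
  thus "U s - U t \<le> (s - t) * r t" unfolding e using assms by simp
qed

text \<open>Regular variation of \<open>lam\<close> turns \<open>lam t U t \<longrightarrow> kappa/\<alpha>\<close> into a statement about increments.\<close>
lemma lam_U_increment_tendsto:
  assumes x: "0 < x"
  shows "((\<lambda>t. lam t * (U (x * t) - U t)) \<longlongrightarrow> kappa / \<alpha> * (x powr \<alpha> - 1)) at_top"
proof -
  have tau: "filterlim (\<lambda>t. x * t) at_top at_top"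
    by (rule filterlim_tendsto_pos_mult_at_top[OF tendsto_const x filterlim_ident])
  have "((\<lambda>t. lam (x * t) * U (x * t) * inverse (lam (x * t) / lam t) - lam t * U t)
      \<longlongrightarrow> kappa / \<alpha> * inverse (x powr - \<alpha>) - kappa / \<alpha>) at_top"
    using x filterlim_compose[OF lam_U_tendsto tau]
    by (intro tendsto_intros lam_ratio_tendsto lam_U_tendsto) (simp_all add: o_def)
  moreover have "eventually (\<lambda>t. lam (x * t) * U (x * t) * inverse (lam (x * t) / lam t) - lam t * U t
      = lam t * (U (x * t) - U t)) at_top"
    using eventually_gt_at_top[of 0]
  proof eventually_elim
    case (elim t)
    have "lam (x * t) > 0" "lam t > 0" using lam_pos x elim by auto
    thus ?case by (simp add: field_simps)
  qed
  moreover have "kappa / \<alpha> * inverse (x powr - \<alpha>) - kappa / \<alpha> = kappa / \<alpha> * (x powr \<alpha> - 1)"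
    using x by (simp add: powr_minus algebra_simps)
  ultimately show ?thesis by (simp add: tendsto_cong)
qed

text \<open>Monotone density: since \<open>r\<close> is nonincreasing, \<open>(x - 1) t r(t) lam(t)\<close> lies between the
  increments \<open>lam t (U (x t) - U t)\<close> for \<open>x\<close> on either side of \<open>1\<close>, and
  \<open>(x powr \<alpha> - 1) / (\<alpha> (x - 1)) \<longrightarrow> 1\<close> as \<open>x \<longrightarrow> 1\<close>.\<close>
lemma density_lower:
  assumes b: "b < kappa" shows "eventually (\<lambda>t. b < t * r t * lam t) at_top"
proof -
  define e where "e = \<alpha> - \<alpha> * b / kappa"
  have e: "0 < e" unfolding e_def using b kappa_pos alpha by (simp add: field_simps)
  obtain d where d: "d > 0" and Q: "\<And>h. h \<noteq> 0 \<Longrightarrow> \<bar>h\<bar> < d \<Longrightarrow> \<bar>((1 + h) powr \<alpha> - 1) / h - \<alpha>\<bar> < e"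
    using powr_difference_quotient[OF e] by blast
  define x where "x = 1 + d / 2"
  have x: "1 < x" unfolding x_def using d by auto
  define q where "q = (x powr \<alpha> - 1) / (x - 1)"
  have "q = ((1 + d / 2) powr \<alpha> - 1) / (d / 2)" unfolding q_def x_def by simp
  hence "\<bar>q - \<alpha>\<bar> < e" using Q[of "d / 2"] d by simp
  hence "\<alpha> * b / kappa < q" unfolding e_def by (simp add: abs_less_iff)
  hence "kappa / \<alpha> * (\<alpha> * b / kappa) < kappa / \<alpha> * q"
    using kappa_pos alpha by (intro mult_strict_left_mono) auto
  hence "b < kappa / \<alpha> * q" using kappa_pos alpha by simp
  moreover have "((\<lambda>t. lam t * (U (x * t) - U t) / (x - 1)) \<longlongrightarrow> kappa / \<alpha> * q) at_top"
  proof -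
    have "((\<lambda>t. lam t * (U (x * t) - U t) / (x - 1)) \<longlongrightarrow> kappa / \<alpha> * (x powr \<alpha> - 1) / (x - 1)) at_top"
      using x by (intro tendsto_divide lam_U_increment_tendsto tendsto_const) auto
    thus ?thesis by (simp add: q_def)
  qed
  ultimately have "eventually (\<lambda>t. b < lam t * (U (x * t) - U t) / (x - 1)) at_top"
    by (simp add: order_tendstoD(1))
  thus ?thesis using eventually_gt_at_top[of 0]
  proof eventually_elim
    case (elim t)
    have "lam t * (U (x * t) - U t) \<le> lam t * ((x * t - t) * r t)"
      using U_increment_bounds(2)[of t "x * t"] lam_pos[of t] elim x by (intro mult_left_mono) auto
    also have "\<dots> = (t * r t * lam t) * (x - 1)" by (simp add: algebra_simps)
    finally have "lam t * (U (x * t) - U t) / (x - 1) \<le> t * r t * lam t"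
      using x by (simp add: pos_divide_le_eq)
    thus ?case using elim(1) by linarith
  qed
qed

lemma density_upper:
  assumes b: "kappa < b" shows "eventually (\<lambda>t. t * r t * lam t < b) at_top"
proof -
  define e where "e = \<alpha> * b / kappa - \<alpha>"
  have e: "0 < e" unfolding e_def using b kappa_pos alpha by (simp add: field_simps)
  obtain d where d: "d > 0" and Q: "\<And>h. h \<noteq> 0 \<Longrightarrow> \<bar>h\<bar> < d \<Longrightarrow> \<bar>((1 + h) powr \<alpha> - 1) / h - \<alpha>\<bar> < e"
    using powr_difference_quotient[OF e] by blast
  define h where "h = min (d / 2) (1 / 2)"
  have h: "0 < h" "h < d" "h < 1" unfolding h_def using d by auto
  define x where "x = 1 - h"
  have x: "0 < x" "x < 1" unfolding x_def using h by auto
  define q where "q = (x powr \<alpha> - 1) / (x - 1)"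
  have "q = ((1 + - h) powr \<alpha> - 1) / (- h)" unfolding q_def x_def by simp
  hence "\<bar>q - \<alpha>\<bar> < e" using Q[of "- h"] h by simp
  hence "q < \<alpha> * b / kappa" unfolding e_def by (simp add: abs_less_iff)
  hence "kappa / \<alpha> * q < kappa / \<alpha> * (\<alpha> * b / kappa)"
    using kappa_pos alpha by (intro mult_strict_left_mono) auto
  hence "kappa / \<alpha> * q < b" using kappa_pos alpha by simp
  moreover have "((\<lambda>t. lam t * (U (x * t) - U t) / (x - 1)) \<longlongrightarrow> kappa / \<alpha> * q) at_top"
  proof -
    have "((\<lambda>t. lam t * (U (x * t) - U t) / (x - 1)) \<longlongrightarrow> kappa / \<alpha> * (x powr \<alpha> - 1) / (x - 1)) at_top"
      using x by (intro tendsto_divide lam_U_increment_tendsto tendsto_const) auto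
    thus ?thesis by (simp add: q_def)
  qed
  ultimately have "eventually (\<lambda>t. lam t * (U (x * t) - U t) / (x - 1) < b) at_top"
    by (simp add: order_tendstoD(2))
  thus ?thesis using eventually_gt_at_top[of 0]
  proof eventually_elim
    case (elim t)
    have "lam t * ((t - x * t) * r t) \<le> lam t * (U t - U (x * t))"
      using U_increment_bounds(1)[of "x * t" t] lam_pos[of t] elim x by (intro mult_left_mono) auto
    hence "(t * r t * lam t) * (1 - x) \<le> lam t * (U t - U (x * t))" by (simp add: algebra_simps)
    hence "t * r t * lam t \<le> lam t * (U t - U (x * t)) / (1 - x)" using x by (simp add: pos_le_divide_eq)
    also have "\<dots> = lam t * (U (x * t) - U t) / (x - 1)"
      using x by (subst frac_eq_eq) (auto simp: algebra_simps)
    finally show ?case using elim(1) by linarith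
  qed
qed

lemma density: "((\<lambda>t. t * r t * lam t) \<longlongrightarrow> kappa) at_top"
  by (rule order_tendstoI) (auto intro: density_lower density_upper)

lemma r_asymptotics: "((\<lambda>t. r t * t powr (1 - \<alpha>) * L t) \<longlongrightarrow> sin (\<alpha> * pi) / pi) at_top"
proof -
  have ev: "eventually (\<lambda>t. t * r t * lam t = r t * t powr (1 - \<alpha>) * L t) at_top"
    using eventually_gt_at_top[of 0]
  proof eventually_elim
    case (elim t)
    have "t * t powr - \<alpha> = t powr (1 - \<alpha>)" using elim by (simp add: powr_diff powr_minus divide_inverse)
    moreover have "t * r t * (L t * t powr - \<alpha>) = r t * (t * t powr - \<alpha>) * L t"
      by (simp only: ac_simps)
    ultimately show ?case unfolding lam_eq[OF elim] by simp
  qed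
  from density show ?thesis unfolding kappa_eq tendsto_cong[OF ev] .
qed

text \<open>Combining the density limit with Potter's lower bound for \<open>lam\<close>: \<open>r t = O(t powr (\<beta> - 1))\<close>
  for every \<open>\<beta> > \<alpha>\<close>.\<close>
lemma r_power_bound:
  assumes "\<alpha> < \<beta>"
  obtains T K where "0 < T" "\<And>t. T \<le> t \<Longrightarrow> r t \<le> K * t powr (\<beta> - 1)"
proof -
  obtain T0 c where T0: "0 < T0" and c: "0 < c" and lb: "\<And>t. T0 \<le> t \<Longrightarrow> c * t powr - \<beta> \<le> lam t"
    using lam_power_lower_bound[OF assms] by blast
  have "eventually (\<lambda>t. t * r t * lam t < 2 * kappa) at_top"
    using density_upper kappa_pos by simp
  then obtain T1 where T1: "\<And>t. t \<ge> T1 \<Longrightarrow> t * r t * lam t < 2 * kappa"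
    by (auto simp: eventually_at_top_linorder)
  define T where "T = max T0 T1"
  have bound: "r t \<le> (2 * kappa / c) * t powr (\<beta> - 1)" if t: "T \<le> t" for t
  proof -
    have tp: "0 < t" using t T0 unfolding T_def by simp
    have "r t * (c * t powr (1 - \<beta>)) = r t * (t * (c * t powr - \<beta>))"
      using tp by (simp add: powr_diff powr_minus field_simps)
    also have "\<dots> \<le> r t * (t * lam t)"
      using lb[of t] t tp r_nonneg[of t] unfolding T_def by (intro mult_left_mono) auto
    also have "\<dots> < 2 * kappa" using T1[of t] t unfolding T_def by (simp add: ac_simps)
    finally show ?thesis using c tp by (simp add: powr_diff powr_minus field_simps)
  qed
  have "0 < T" using T0 unfolding T_def by simp
  thus ?thesis using bound by (rule that)
qed

lemma r_square_integrable:
  assumes "\<alpha> < 1 / 2" shows "set_integrable lborel {0..} (\<lambda>t. (r t)\<^sup>2)"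
proof -
  define \<beta> where "\<beta> = (\<alpha> + 1 / 2) / 2"
  have b: "\<alpha> < \<beta>" "2 * \<beta> - 2 < -1" unfolding \<beta>_def using assms by auto
  obtain T K where T: "0 < T" and bnd: "\<And>t. T \<le> t \<Longrightarrow> r t \<le> K * t powr (\<beta> - 1)"
    using r_power_bound[OF b(1)] by blast
  define w where "w t = indicator {0..T} t + K\<^sup>2 * (indicator {T..} t * t powr (2 * \<beta> - 2))" for t :: real
  have wi: "integrable lborel w" unfolding w_def using T b(2)
    by (intro Bochner_Integration.integrable_add Bochner_Integration.integrable_mult_right
        integrable_powr_tail integrable_real_indicator) (auto simp: emeasure_lborel_Icc_eq)
  have meas: "(\<lambda>t. indicator {0..} t *\<^sub>R (r t)\<^sup>2) \<in> borel_measurable lborel"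
    using borel_measurable_continuous_on_indicator[of "{0..}" "\<lambda>t. (r t)\<^sup>2"] r_cont
    by (auto intro: continuous_intros)
  have "norm (indicator {0..} t *\<^sub>R (r t)\<^sup>2) \<le> norm (w t)" for t
  proof (cases "0 \<le> t")
    case t: True
    have "0 \<le> K\<^sup>2 * (indicator {T..} t * t powr (2 * \<beta> - 2))" by simp
    moreover have "(r t)\<^sup>2 \<le> w t"
    proof (cases "t \<le> T")
      case True
      have "(r t)\<^sup>2 \<le> 1" using r_nonneg r_le1 t by (simp add: power_le_one)
      moreover have "indicator {0..T} t = (1::real)" using True t by simp
      ultimately show ?thesis unfolding w_def using \<open>0 \<le> K\<^sup>2 * _\<close> by linarith
    next
      case False
      have "(r t)\<^sup>2 \<le> (K * t powr (\<beta> - 1))\<^sup>2"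
        using bnd[of t] r_nonneg[of t] False t by (intro power_mono) auto
      also have "\<dots> = K\<^sup>2 * (t powr (\<beta> - 1))\<^sup>2" by (simp add: power_mult_distrib)
      also have "(t powr (\<beta> - 1))\<^sup>2 = t powr ((\<beta> - 1) + (\<beta> - 1))"
        unfolding power2_eq_square by (simp only: powr_add)
      also have "(\<beta> - 1) + (\<beta> - 1) = 2 * \<beta> - 2" by simp
      finally show ?thesis unfolding w_def using False by simp
    qed
    ultimately show ?thesis using t by simp
  qed (simp add: w_def indicator_def)
  thus ?thesis unfolding set_integrable_def
    using Bochner_Integration.integrable_bound[OF wi meas] by (simp add: AE_I2)
qed

text \<open>If \<open>r\<close> were integrable, \<open>lam t U t \<le> lam t \<integral>r \<longrightarrow> 0\<close>, contradicting \<open>lam t U t \<longrightarrow> kappa/\<alpha> > 0\<close>.\<close>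
lemma r_not_integrable: "\<not> set_integrable lborel {0..} r"
proof
  assume I: "set_integrable lborel {0..} r"
  define M where "M = (LBINT t:{0..}. r t)"
  have U_le: "U t \<le> M" if t: "0 \<le> t" for t
  proof -
    have i1: "set_integrable lborel {0..t} r" and i2: "set_integrable lborel {t<..} r"
      using t by (auto intro: set_integrable_subset[OF I])
    have "{0..t} \<union> {t<..} = {0..}" using t by auto
    moreover have "(LBINT s:{0..t} \<union> {t<..}. r s) = (LBINT s:{0..t}. r s) + (LBINT s:{t<..}. r s)"
      by (rule set_integral_Un[OF _ i1 i2]) auto
    ultimately have "M = (LBINT s:{0..t}. r s) + (LBINT s:{t<..}. r s)"
      unfolding M_def by simp
    moreover have "(LBINT s:{t<..}. r s) \<ge> 0"
      unfolding set_lebesgue_integral_def using r_nonneg t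
      by (intro Bochner_Integration.integral_nonneg) (auto simp: indicator_def)
    moreover have "(LBINT s:{0..t}. r s) = U t"
      unfolding U_def by (rule set_borel_integral_eq_integral(2)[OF i1])
    ultimately show ?thesis by simp
  qed
  have "((\<lambda>t. lam t * U t) \<longlongrightarrow> 0) at_top"
  proof (rule tendsto_sandwich[of "\<lambda>_. 0" _ _ "\<lambda>t. lam t * M"])
    show "eventually (\<lambda>t. 0 \<le> lam t * U t) at_top" "eventually (\<lambda>t. lam t * U t \<le> lam t * M) at_top"
      using eventually_ge_at_top[of 0]
      by (eventually_elim, use U_le lam_nonneg r_nonneg in
          \<open>auto intro!: mult_left_mono mult_nonneg_nonneg integral_nonneg integrable_continuous_real
             continuous_on_subset[OF r_cont] simp: U_def\<close>)+
    show "((\<lambda>t. lam t * M) \<longlongrightarrow> 0) at_top" using tendsto_mult_left_zero[OF lam_tendsto_0] by simp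
  qed simp
  with lam_U_tendsto have "kappa / \<alpha> = 0" by (rule tendsto_unique[rotated 1]) simp
  thus False using kappa_pos alpha by simp
qed

end

theorem theorem3p1:
  fixes k r L :: "real \<Rightarrow> real" and \<alpha> a :: real
  assumes C1_int: "set_integrable lborel {0..} k"
    and C1_cont: "continuous_on {0..} k"
    and C1_pos: "\<And>t. t \<ge> 0 \<Longrightarrow> k t > 0"
    and C2: "convex_on {0..} (\<lambda>t. ln (tail_int k t))"
    and alpha: "0 < \<alpha>" "\<alpha> < 1"
    and L_sv: "slowly_varying L"
    and C3: "\<And>t. t > 0 \<Longrightarrow> tail_int k t = L t * t powr (- \<alpha>)"
    and a_def: "a = - (LBINT s:{0..}. k s)"
    and r0: "r 0 = 1"
    and r_eq: "\<And>t. t \<ge> 0 \<Longrightarrow>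
       (r has_real_derivative (a * r t + (LBINT s:{0..t}. k (t - s) * r s))) (at t within {0..})"
  shows "((\<lambda>t. r t * t powr (1 - \<alpha>) * L t) \<longlongrightarrow> sin (\<alpha> * pi) / pi) at_top \<and>
    (\<alpha> < 1/2 \<longrightarrow> set_integrable lborel {0..} (\<lambda>t. (r t)\<^sup>2) \<and> \<not> set_integrable lborel {0..} r)"
proof -
  interpret volterra_resolvent k r L \<alpha> a
    using assms by unfold_locales
  show ?thesis using r_asymptotics r_square_integrable r_not_integrable by blast
qed

end
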